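(* Let $A=\langle Q,\delta,\gamma,F\rangle$ be a finitely supported pomset automaton. Let $q_0,q_2,q_4\in Q$ and $q_1,q_3,q_5\in F$, and let $U,V,W,X\in\mathsf{Pom}^{\mathsf{sp}}$ be such that $q_0\xrightarrow{U}_A q_1$, $q_0\xrightarrow{V}_A q_0$, $q_2\xrightarrow{X}_A q_3$, $q_4\xrightarrow{W}_A q_5$ and $\gamma(q_0,q_2,q_0)=q_4$. If $X\neq 1$, and moreover $W\neq1$ or $V\neq1$, then $L_A(q_0)$ has unbounded depth, i.e., for every $n\in\mathbb N$ there is $Y\in L_A(q_0)$ with $|Y|>n$.
   Context: Fix a finite alphabet $\Sigma$; pomsets are isomorphism classes of $\Sigma$-labelled posets, $1$ the empty pomset, $a\in\Sigma$ the one-point pomset, $U\cdot V$ the disjoint union with all of $U$ below all of $V$, $U\parallel V$ the disjoint union without added order, and $\mathsf{Pom}^{\mathsf{sp}}$ the smallest set containing $1$ and all $a$ closed under both. Every non-empty series-parallel pomset is exactly one of: a primitive $a$, a sequential composition of two non-empty smaller sp-pomsets, or a parallel composition of two non-empty smaller sp-pomsets. The depth $|U|$ is defined by $|1|=0$, $|a|=1$, and if $U=U_0\cdots U_{n-1}$ or $U=U_0\parallel\dots\parallel U_{n-1}$ with non-empty $U_i$ and $n>1$ maximal for such a decomposition, then $|U|=\max_i|U_i|+1$. A PA is $A=\langle Q,\delta,\gamma,F\rangle$ with $F\subseteq Q$, $\delta:Q\times\Sigma\to Q$, $\gamma:Q^3\to Q$, with states $\bot\notin F$, $\top\in F$ such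 that $\delta(\bot,a)=\delta(\top,a)=\bot$, $\gamma(\bot,r,s)=\gamma(\top,r,s)=\bot$. Traces: the smallest relation with $q\xrightarrow{1}_A q$; $q\xrightarrow{a}_A\delta(q,a)$; $q\xrightarrow{U}_A q''\xrightarrow{V}_A q'$ implies $q\xrightarrow{U\cdot V}_A q'$; $r\xrightarrow{U}_A r'\in F$, $s\xrightarrow{V}_A s'\in F$ imply $q\xrightarrow{U\parallel V}_A\gamma(q,r,s)$. $L_A(q)=\{U:\exists q'\in F.\ q\xrightarrow{U}_A q'\}$. $\preceq_A$ is the smallest preorder with $r,s\preceq_A q$ when $\gamma(q,r,s)\neq\bot$, $\delta(q,a)\preceq_A q$, $\gamma(q,r,s)\preceq_A q$; $\pi_A(q)$ is the smallest $\preceq_A$-downward-closed set containing $q$; $A$ is finitely supported if all $\pi_A(q)$ are finite. *)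

theory Defs
  imports Main
begin

record 'a lpo =
  car :: "nat set"
  rel :: "(nat \<times> nat) set"
  lab :: "nat \<Rightarrow> 'a"

definition lpo_wf :: "'a lpo \<Rightarrow> bool" where
  "lpo_wf P \<longleftrightarrow> finite (car P) \<and> rel P \<subseteq> car P \<times> car P \<and>
     refl_on (car P) (rel P) \<and> antisym (rel P) \<and> trans (rel P)"

definition lpo_iso :: "'a lpo \<Rightarrow> 'a lpo \<Rightarrow> bool" where
  "lpo_iso P Q \<longleftrightarrow> (\<exists>f. bij_betw f (car P) (car Q) \<and>
     (\<forall>x\<in>car P. lab Q (f x) = lab P x) \<and>
     (\<forall>x\<in>car P. \<forall>y\<in>car P. (x, y) \<in> rel P \<longleftrightarrow> (f x, f y) \<in> rel Q))"

typedef 'a pomset = "{C :: 'a lpo set. \<exists>P. lpo_wf P \<and> C = {Q. lpo_wf Q \<and> lpo_iso P Q}}"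
  by (rule exI[where x="{Q. lpo_wf Q \<and> lpo_iso \<lparr>car = {}, rel = {}, lab = (\<lambda>_. undefined)\<rparr> Q}"],
      rule CollectI, rule exI[where x="\<lparr>car = {}, rel = {}, lab = (\<lambda>_. undefined)\<rparr>"],
      simp add: lpo_wf_def refl_on_def antisym_def trans_def)

definition pom_of :: "'a lpo \<Rightarrow> 'a pomset" where
  "pom_of P = Abs_pomset {Q. lpo_wf Q \<and> lpo_iso P Q}"

definition rep :: "'a pomset \<Rightarrow> 'a lpo" where
  "rep U = (SOME P. P \<in> Rep_pomset U)"

definition seq_lpo :: "'a lpo \<Rightarrow> 'a lpo \<Rightarrow> 'a lpo" where
  "seq_lpo P Q = \<lparr>car = (\<lambda>x. 2 * x) ` car P \<union> (\<lambda>y. 2 * y + 1) ` car Q,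
     rel = {(2 * x, 2 * y) | x y. (x, y) \<in> rel P} \<union> {(2 * x + 1, 2 * y + 1) | x y. (x, y) \<in> rel Q}
           \<union> {(2 * x, 2 * y + 1) | x y. x \<in> car P \<and> y \<in> car Q},
     lab = (\<lambda>n. if even n then lab P (n div 2) else lab Q (n div 2))\<rparr>"

definition par_lpo :: "'a lpo \<Rightarrow> 'a lpo \<Rightarrow> 'a lpo" where
  "par_lpo P Q = \<lparr>car = (\<lambda>x. 2 * x) ` car P \<union> (\<lambda>y. 2 * y + 1) ` car Q,
     rel = {(2 * x, 2 * y) | x y. (x, y) \<in> rel P} \<union> {(2 * x + 1, 2 * y + 1) | x y. (x, y) \<in> rel Q},
     lab = (\<lambda>n. if even n then lab P (n div 2) else lab Q (n div 2))\<rparr>"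

definition pom_one :: "'a pomset" where
  "pom_one = pom_of \<lparr>car = {}, rel = {}, lab = (\<lambda>_. undefined)\<rparr>"

definition pom_prim :: "'a \<Rightarrow> 'a pomset" where
  "pom_prim a = pom_of \<lparr>car = {0}, rel = {(0, 0)}, lab = (\<lambda>_. a)\<rparr>"

definition pom_seq :: "'a pomset \<Rightarrow> 'a pomset \<Rightarrow> 'a pomset" where
  "pom_seq U V = pom_of (seq_lpo (rep U) (rep V))"

definition pom_par :: "'a pomset \<Rightarrow> 'a pomset \<Rightarrow> 'a pomset" where
  "pom_par U V = pom_of (par_lpo (rep U) (rep V))"

inductive_set sp_pomsets :: "'a pomset set" where
  sp_one: "pom_one \<in> sp_pomsets"
| sp_prim: "pom_prim a \<in> sp_pomsets"
| sp_seq: "U \<in> sp_pomsets \<Longrightarrow> V \<in> sp_pomsets \<Longrightarrow> pom_seq U V \<in> sp_pomsets"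
| sp_par: "U \<in> sp_pomsets \<Longrightarrow> V \<in> sp_pomsets \<Longrightarrow> pom_par U V \<in> sp_pomsets"

definition seq_list :: "'a pomset list \<Rightarrow> 'a pomset" where
  "seq_list Us = foldr pom_seq Us pom_one"

definition par_list :: "'a pomset list \<Rightarrow> 'a pomset" where
  "par_list Us = foldr pom_par Us pom_one"

inductive has_depth :: "'a pomset \<Rightarrow> nat \<Rightarrow> bool" where
  depth_one: "has_depth pom_one 0"
| depth_prim: "has_depth (pom_prim a) 1"
| depth_seq: "\<lbrakk> length Us > 1; \<forall>Ui\<in>set Us. Ui \<noteq> pom_one; U = seq_list Us;
     \<not> (\<exists>Vs. length Vs > length Us \<and> (\<forall>Vi\<in>set Vs. Vi \<noteq> pom_one) \<and> U = seq_list Vs);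
     length ds = length Us; \<forall>i<length Us. has_depth (Us ! i) (ds ! i) \<rbrakk>
     \<Longrightarrow> has_depth U (Max (set ds) + 1)"
| depth_par: "\<lbrakk> length Us > 1; \<forall>Ui\<in>set Us. Ui \<noteq> pom_one; U = par_list Us;
     \<not> (\<exists>Vs. length Vs > length Us \<and> (\<forall>Vi\<in>set Vs. Vi \<noteq> pom_one) \<and> U = par_list Vs);
     length ds = length Us; \<forall>i<length Us. has_depth (Us ! i) (ds ! i) \<rbrakk>
     \<Longrightarrow> has_depth U (Max (set ds) + 1)"

definition depth :: "'a pomset \<Rightarrow> nat" where
  "depth U = (THE d. has_depth U d)"

definition is_PA :: "('q \<Rightarrow> 'a \<Rightarrow> 'q) \<Rightarrow> ('q \<Rightarrow> 'q \<Rightarrow> 'q \<Rightarrow> 'q) \<Rightarrow> 'q set \<Rightarrow> 'q \<Rightarrow> 'q \<Rightarrow> bool" where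
  "is_PA delta gamma F qbot qtop \<longleftrightarrow> qbot \<notin> F \<and> qtop \<in> F \<and>
     (\<forall>a. delta qbot a = qbot \<and> delta qtop a = qbot) \<and>
     (\<forall>r s. gamma qbot r s = qbot \<and> gamma qtop r s = qbot)"

inductive trace :: "('q \<Rightarrow> 'a \<Rightarrow> 'q) \<Rightarrow> ('q \<Rightarrow> 'q \<Rightarrow> 'q \<Rightarrow> 'q) \<Rightarrow> 'q set
    \<Rightarrow> 'q \<Rightarrow> 'a pomset \<Rightarrow> 'q \<Rightarrow> bool"
  for delta gamma F where
  tr_one: "trace delta gamma F q pom_one q"
| tr_prim: "trace delta gamma F q (pom_prim a) (delta q a)"
| tr_seq: "trace delta gamma F q U q'' \<Longrightarrow> trace delta gamma F q'' V q'
     \<Longrightarrow> trace delta gamma F q (pom_seq U V) q'"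
| tr_par: "trace delta gamma F r U r' \<Longrightarrow> r' \<in> F \<Longrightarrow> trace delta gamma F s V s' \<Longrightarrow> s' \<in> F
     \<Longrightarrow> trace delta gamma F q (pom_par U V) (gamma q r s)"

definition lang :: "('q \<Rightarrow> 'a \<Rightarrow> 'q) \<Rightarrow> ('q \<Rightarrow> 'q \<Rightarrow> 'q \<Rightarrow> 'q) \<Rightarrow> 'q set \<Rightarrow> 'q \<Rightarrow> 'a pomset set" where
  "lang delta gamma F q = {U. \<exists>q'\<in>F. trace delta gamma F q U q'}"

inductive below :: "('q \<Rightarrow> 'a \<Rightarrow> 'q) \<Rightarrow> ('q \<Rightarrow> 'q \<Rightarrow> 'q \<Rightarrow> 'q) \<Rightarrow> 'q \<Rightarrow> 'q \<Rightarrow> 'q \<Rightarrow> bool"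
  for delta gamma qbot where
  below_refl: "below delta gamma qbot q q"
| below_trans: "below delta gamma qbot p q \<Longrightarrow> below delta gamma qbot q r \<Longrightarrow> below delta gamma qbot p r"
| below_fork_l: "gamma q r s \<noteq> qbot \<Longrightarrow> below delta gamma qbot r q"
| below_fork_r: "gamma q r s \<noteq> qbot \<Longrightarrow> below delta gamma qbot s q"
| below_delta: "below delta gamma qbot (delta q a) q"
| below_gamma: "below delta gamma qbot (gamma q r s) q"

definition support :: "('q \<Rightarrow> 'a \<Rightarrow> 'q) \<Rightarrow> ('q \<Rightarrow> 'q \<Rightarrow> 'q \<Rightarrow> 'q) \<Rightarrow> 'q \<Rightarrow> 'q \<Rightarrow> 'q set" where
  "support delta gamma qbot q =
     \<Inter> {S. q \<in> S \<and> (\<forall>p p'. p \<in> S \<longrightarrow> below delta gamma qbot p' p \<longrightarrow> p' \<in> S)}"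

definition finitely_supported :: "('q \<Rightarrow> 'a \<Rightarrow> 'q) \<Rightarrow> ('q \<Rightarrow> 'q \<Rightarrow> 'q \<Rightarrow> 'q) \<Rightarrow> 'q \<Rightarrow> bool" where
  "finitely_supported delta gamma qbot \<longleftrightarrow> (\<forall>q. finite (support delta gamma qbot q))"

end

theory Submission
  imports Defs
begin

(* Put Y_0 = U and Y_(k+1) = V . ((X || Y_k) . W). The loop V at q0, followed by X || Y_k forked
   from q0 into q2 and q0 and joined in gamma(q0, q2, q0) = q4, followed by W, shows that every Y_k
   lies in L_A(q0). For k >= 1, Y_k is a sequential composition of two nonempty pomsets (this is
   where V or W is used), so it is a connected factor of the parallel composition X || Y_k, which
   in turn is a connected factor of the sequential composition Y_(k+1); hence the depth grows
   strictly along the sequence.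

   The crux is that the factors of a maximal sequential (parallel) decomposition are exactly the
   connected components of the incomparability (comparability) graph. This makes the depth unique,
   shows that it exists for series-parallel pomsets, and shows that a connected factor has smaller
   depth. *)

lemma lpo_isoI:
  assumes "bij_betw f (car P) (car Q)" "\<And>x. x \<in> car P \<Longrightarrow> lab Q (f x) = lab P x"
    "\<And>x y. x \<in> car P \<Longrightarrow> y \<in> car P \<Longrightarrow> (x, y) \<in> rel P \<longleftrightarrow> (f x, f y) \<in> rel Q"
  shows "lpo_iso P Q"
  using assms unfolding lpo_iso_def by blast

lemma lpo_iso_refl: "lpo_iso P P"
  by (rule lpo_isoI[of id]) auto

lemma lpo_iso_sym:
  assumes "lpo_iso P Q"
  shows "lpo_iso Q P"
proof -
  obtain f where f: "bij_betw f (car P) (car Q)" "\<forall>x\<in>car P. lab Q (f x) = lab P x"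
    "\<forall>x\<in>car P. \<forall>y\<in>car P. (x, y) \<in> rel P \<longleftrightarrow> (f x, f y) \<in> rel Q"
    using assms unfolding lpo_iso_def by blast
  let ?g = "inv_into (car P) f"
  have g: "bij_betw ?g (car Q) (car P)"
    using f(1) by (rule bij_betw_inv_into)
  have "\<And>y. y \<in> car Q \<Longrightarrow> f (?g y) = y" "\<And>y. y \<in> car Q \<Longrightarrow> ?g y \<in> car P"
    using f(1) g by (auto simp: bij_betw_inv_into_right bij_betwE)
  with g f(2,3) show ?thesis
    by (intro lpo_isoI[of ?g]; metis)
qed

lemma lpo_iso_trans:
  assumes "lpo_iso P Q" "lpo_iso Q R"
  shows "lpo_iso P R"
proof -
  obtain f where f: "bij_betw f (car P) (car Q)" "\<forall>x\<in>car P. lab Q (f x) = lab P x"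
    "\<forall>x\<in>car P. \<forall>y\<in>car P. (x, y) \<in> rel P \<longleftrightarrow> (f x, f y) \<in> rel Q"
    using assms(1) unfolding lpo_iso_def by blast
  obtain g where g: "bij_betw g (car Q) (car R)" "\<forall>x\<in>car Q. lab R (g x) = lab Q x"
    "\<forall>x\<in>car Q. \<forall>y\<in>car Q. (x, y) \<in> rel Q \<longleftrightarrow> (g x, g y) \<in> rel R"
    using assms(2) unfolding lpo_iso_def by blast
  have "\<And>x. x \<in> car P \<Longrightarrow> f x \<in> car Q"
    using f(1) bij_betwE by blast
  with f g show ?thesis
    by (intro lpo_isoI[of "g \<circ> f"]) (auto intro: bij_betw_trans)
qed

lemma Rep_pomset_pom_of:
  "lpo_wf P \<Longrightarrow> Rep_pomset (pom_of P) = {Q. lpo_wf Q \<and> lpo_iso P Q}"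
  unfolding pom_of_def by (intro Abs_pomset_inverse) blast

lemma pom_of_eq_iff:
  assumes "lpo_wf P" "lpo_wf Q"
  shows "pom_of P = pom_of Q \<longleftrightarrow> lpo_iso P Q"
proof
  assume "pom_of P = pom_of Q"
  then have "Q \<in> {R. lpo_wf R \<and> lpo_iso P R}"
    using assms Rep_pomset_pom_of[of P] Rep_pomset_pom_of[of Q] lpo_iso_refl by auto
  then show "lpo_iso P Q" by simp
next
  assume "lpo_iso P Q"
  then have "{R. lpo_wf R \<and> lpo_iso P R} = {R. lpo_wf R \<and> lpo_iso Q R}"
    using lpo_iso_sym lpo_iso_trans by blast
  then show "pom_of P = pom_of Q"
    unfolding pom_of_def by simp
qed

lemma rep_wf_pom_of_rep: "lpo_wf (rep U) \<and> pom_of (rep U) = U"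
proof -
  obtain P where P: "lpo_wf P" "Rep_pomset U = {Q. lpo_wf Q \<and> lpo_iso P Q}"
    using Rep_pomset[of U] by blast
  then have "P \<in> Rep_pomset U"
    using lpo_iso_refl by blast
  then have "rep U \<in> Rep_pomset U"
    unfolding rep_def by (rule someI)
  then have rep: "lpo_wf (rep U)" "lpo_iso P (rep U)"
    using P by auto
  have "pom_of (rep U) = pom_of P"
    using rep P(1) pom_of_eq_iff lpo_iso_sym by blast
  also have "pom_of P = U"
    unfolding pom_of_def using P(2)[symmetric] Rep_pomset_inverse by simp
  finally show ?thesis
    using rep by simp
qed

lemma rep_wf [simp]: "lpo_wf (rep U)"
  and pom_of_rep [simp]: "pom_of (rep U) = U"
  using rep_wf_pom_of_rep by blast+

lemma pom_of_eq_pom_one_iff: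
  assumes "lpo_wf P"
  shows "pom_of P = pom_one \<longleftrightarrow> car P = {}"
proof -
  let ?E = "\<lparr>car = {}, rel = {}, lab = (\<lambda>_. undefined)\<rparr> :: 'a lpo"
  have "lpo_wf ?E"
    by (simp add: lpo_wf_def refl_on_def antisym_def trans_def)
  then have "pom_of P = pom_one \<longleftrightarrow> lpo_iso P ?E"
    unfolding pom_one_def using pom_of_eq_iff[OF assms] by blast
  also have "\<dots> \<longleftrightarrow> car P = {}"
    using assms unfolding lpo_iso_def lpo_wf_def by (auto simp: bij_betw_def)
  finally show ?thesis .
qed

lemma car_rep_eq_empty_iff: "car (rep U) = {} \<longleftrightarrow> U = pom_one"
  using pom_of_eq_pom_one_iff[OF rep_wf, of U] by simp

lemma pom_of_eq_pom_prim_iff: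
  assumes "lpo_wf P"
  shows "(\<exists>a. pom_of P = pom_prim a) \<longleftrightarrow> card (car P) = 1"
proof -
  let ?E = "\<lambda>a. \<lparr>car = {0}, rel = {(0, 0)}, lab = (\<lambda>_. a)\<rparr> :: 'a lpo"
  have "lpo_wf (?E a)" for a
    by (simp add: lpo_wf_def refl_on_def antisym_def trans_def)
  then have prim: "pom_of P = pom_prim a \<longleftrightarrow> lpo_iso P (?E a)" for a
    unfolding pom_prim_def using assms pom_of_eq_iff by blast
  show ?thesis
  proof
    assume "\<exists>a. pom_of P = pom_prim a"
    then show "card (car P) = 1"
      unfolding prim lpo_iso_def by (auto dest!: bij_betw_same_card)
  next
    assume "card (car P) = 1"
    then obtain x where x: "car P = {x}"
      by (rule card_1_singletonE)
    with assms have "rel P = {(x, x)}"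
      unfolding lpo_wf_def refl_on_def by auto
    with x have "lpo_iso P (?E (lab P x))"
      by (intro lpo_isoI[of "\<lambda>_. 0"]) (auto simp: bij_betw_def)
    then show "\<exists>a. pom_of P = pom_prim a"
      unfolding prim by blast
  qed
qed

lemma card_car_rep_pom_prim: "card (car (rep (pom_prim a))) = 1"
  using pom_of_eq_pom_prim_iff[OF rep_wf, of "pom_prim a"] by auto

section \<open>Restriction and composition of labelled posets\<close>

definition restr :: "'a lpo \<Rightarrow> nat set \<Rightarrow> 'a lpo" where
  "restr P S = \<lparr>car = S, rel = rel P \<inter> S \<times> S, lab = lab P\<rparr>"

lemma restr_simps [simp]:
  "car (restr P S) = S" "rel (restr P S) = rel P \<inter> S \<times> S" "lab (restr P S) = lab P"
  unfolding restr_def by simp_all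

lemma restr_restr [simp]: "T \<subseteq> S \<Longrightarrow> restr (restr P S) T = restr P T"
  unfolding restr_def by auto

lemma restr_car: "lpo_wf P \<Longrightarrow> restr P (car P) = P"
  unfolding restr_def lpo_wf_def by (cases P) (auto simp: Int_absorb2)

lemma restr_wf: "lpo_wf P \<Longrightarrow> S \<subseteq> car P \<Longrightarrow> lpo_wf (restr P S)"
  unfolding lpo_wf_def refl_on_def antisym_def trans_def by (auto intro: finite_subset)

lemma lpo_iso_restrE:
  assumes "lpo_iso (restr P S) (restr Q S')"
  obtains g where "bij_betw g S S'" "\<forall>x\<in>S. lab Q (g x) = lab P x"
    "\<forall>x\<in>S. \<forall>y\<in>S. (x, y) \<in> rel P \<longleftrightarrow> (g x, g y) \<in> rel Q"
proof -
  obtain g where g: "bij_betw g S S'" "\<forall>x\<in>S. lab Q (g x) = lab P x"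
    "\<forall>x\<in>S. \<forall>y\<in>S. (x, y) \<in> rel P \<inter> S \<times> S \<longleftrightarrow> (g x, g y) \<in> rel Q \<inter> S' \<times> S'"
    using assms unfolding lpo_iso_def by auto
  moreover have "\<forall>x\<in>S. g x \<in> S'"
    using g(1) by (auto dest: bij_betwE)
  ultimately show thesis
    by (intro that[of g]) auto
qed

lemma pom_of_restr_eq_pom_one_iff:
  "lpo_wf P \<Longrightarrow> S \<subseteq> car P \<Longrightarrow> pom_of (restr P S) = pom_one \<longleftrightarrow> S = {}"
  using pom_of_eq_pom_one_iff[OF restr_wf] by simp

lemma lpo_iso_restr:
  assumes "bij_betw f (car P) (car Q)" "\<forall>x\<in>car P. lab Q (f x) = lab P x"
    "\<forall>x\<in>car P. \<forall>y\<in>car P. (x, y) \<in> rel P \<longleftrightarrow> (f x, f y) \<in> rel Q"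
    and "S \<subseteq> car P"
  shows "lpo_iso (restr P S) (restr Q (f ` S))"
proof (rule lpo_isoI[of f])
  show "bij_betw f (car (restr P S)) (car (restr Q (f ` S)))"
    using assms(1,4) by (auto simp: bij_betw_def intro: inj_on_subset)
qed (use assms in \<open>auto simp: subset_iff bij_betwE\<close>)

definition lpo_comp :: "bool \<Rightarrow> 'a lpo \<Rightarrow> 'a lpo \<Rightarrow> 'a lpo" where
  "lpo_comp b P Q = (if b then seq_lpo P Q else par_lpo P Q)"

definition pom_comp :: "bool \<Rightarrow> 'a pomset \<Rightarrow> 'a pomset \<Rightarrow> 'a pomset" where
  "pom_comp b = (if b then pom_seq else pom_par)"

definition comp_related :: "bool \<Rightarrow> 'a lpo \<Rightarrow> nat set \<Rightarrow> nat set \<Rightarrow> bool" where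
  "comp_related b P S T \<longleftrightarrow>
     (if b then S \<times> T \<subseteq> rel P else (\<forall>x\<in>S. \<forall>y\<in>T. (x, y) \<notin> rel P \<and> (y, x) \<notin> rel P))"

lemma pom_comp_eq: "pom_comp b A B = pom_of (lpo_comp b (rep A) (rep B))"
  unfolding pom_comp_def lpo_comp_def pom_seq_def pom_par_def by simp

lemma car_lpo_comp:
  "m \<in> car (lpo_comp b P Q) \<longleftrightarrow> (even m \<and> m div 2 \<in> car P) \<or> (odd m \<and> m div 2 \<in> car Q)"
  unfolding lpo_comp_def seq_lpo_def par_lpo_def
  by (auto elim!: evenE oddE simp: Suc_double_not_eq_double double_not_eq_Suc_double)

lemma rel_lpo_comp:
  "(m, n) \<in> rel (lpo_comp b P Q) \<longleftrightarrow>
     (even m \<and> even n \<and> (m div 2, n div 2) \<in> rel P) \<or> (odd m \<and> odd n \<and> (m div 2, n div 2) \<in> rel Q)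
     \<or> (b \<and> even m \<and> odd n \<and> m div 2 \<in> car P \<and> n div 2 \<in> car Q)"
  unfolding lpo_comp_def seq_lpo_def par_lpo_def
  by (auto elim!: evenE oddE simp: Suc_double_not_eq_double double_not_eq_Suc_double)

lemma car_lpo_comp_eq: "car (lpo_comp b P Q) = (*) 2 ` car P \<union> (\<lambda>y. 2 * y + 1) ` car Q"
  unfolding lpo_comp_def seq_lpo_def par_lpo_def by auto

lemma double_image_disjoint: "(*) 2 ` A \<inter> (\<lambda>y. 2 * y + 1) ` B = {}" for A B :: "nat set"
  by (auto simp: double_not_eq_Suc_double)

lemma lab_lpo_comp: "lab (lpo_comp b P Q) m = (if even m then lab P (m div 2) else lab Q (m div 2))"
  unfolding lpo_comp_def seq_lpo_def par_lpo_def by auto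

lemma lpo_comp_wf:
  assumes "lpo_wf P" "lpo_wf Q"
  shows "lpo_wf (lpo_comp b P Q)"
  unfolding lpo_wf_def
proof (intro conjI)
  show "finite (car (lpo_comp b P Q))"
    using assms unfolding lpo_wf_def car_lpo_comp_eq by simp
  show sub: "rel (lpo_comp b P Q) \<subseteq> car (lpo_comp b P Q) \<times> car (lpo_comp b P Q)"
    using assms unfolding lpo_wf_def by (auto simp: rel_lpo_comp car_lpo_comp)
  then show "refl_on (car (lpo_comp b P Q)) (rel (lpo_comp b P Q))"
    using assms unfolding lpo_wf_def refl_on_def by (auto simp: rel_lpo_comp car_lpo_comp)
  show "antisym (rel (lpo_comp b P Q))"
  proof (rule antisymI)
    fix m n assume "(m, n) \<in> rel (lpo_comp b P Q)" "(n, m) \<in> rel (lpo_comp b P Q)"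
    then have "m div 2 = n div 2 \<and> even m = even n"
      using assms unfolding lpo_wf_def by (auto simp: rel_lpo_comp dest: antisymD)
    then show "m = n"
      by (metis dvd_mult_div_cancel odd_two_times_div_two_succ)
  qed
  show "trans (rel (lpo_comp b P Q))"
    using assms unfolding lpo_wf_def by (auto simp: rel_lpo_comp intro!: transI dest: transD)
qed

lemma lpo_iso_lpo_comp_left:
  "lpo_iso P (restr (lpo_comp b P Q) ((*) 2 ` car P))"
  by (rule lpo_isoI[of "(*) 2"])
    (auto simp: bij_betw_def inj_on_def rel_lpo_comp lab_lpo_comp)

lemma lpo_iso_lpo_comp_right:
  "lpo_iso Q (restr (lpo_comp b P Q) ((\<lambda>y. 2 * y + 1) ` car Q))"
  by (rule lpo_isoI[of "\<lambda>y. 2 * y + 1"])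
    (auto simp: bij_betw_def inj_on_def rel_lpo_comp lab_lpo_comp)

lemma comp_related_lpo_comp:
  "comp_related b (lpo_comp b P Q) ((*) 2 ` car P) ((\<lambda>y. 2 * y + 1) ` car Q)"
  unfolding comp_related_def by (auto simp: rel_lpo_comp)

lemma comp_related_mono:
  "comp_related b P S T \<Longrightarrow> S' \<subseteq> S \<Longrightarrow> T' \<subseteq> T \<Longrightarrow> comp_related b P S' T'"
  unfolding comp_related_def by (cases b) auto

lemma comp_related_restr:
  "S \<subseteq> R \<Longrightarrow> T \<subseteq> R \<Longrightarrow> comp_related b (restr P R) S T \<longleftrightarrow> comp_related b P S T"
  unfolding comp_related_def by (cases b) auto

lemma comp_related_Union:
  "(\<And>T. T \<in> \<T> \<Longrightarrow> comp_related b P S T) \<Longrightarrow> comp_related b P S (\<Union>\<T>)"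
  unfolding comp_related_def by (cases b) auto

lemma comp_related_rel:
  assumes "lpo_wf P" "comp_related b P S T" "S \<inter> T = {}" "x \<in> S" "y \<in> T"
  shows "(x, y) \<in> rel P \<longleftrightarrow> b" "(y, x) \<notin> rel P"
  using assms unfolding comp_related_def lpo_wf_def antisym_def by (cases b; fastforce)+

lemma comp_related_iso:
  assumes "\<forall>x\<in>car P. \<forall>y\<in>car P. (x, y) \<in> rel P \<longleftrightarrow> (f x, f y) \<in> rel Q"
    and "S \<subseteq> car P" "T \<subseteq> car P" "comp_related b Q (f ` S) (f ` T)"
  shows "comp_related b P S T"
  using assms unfolding comp_related_def by (cases b) (auto simp: subset_iff)

lemma lpo_iso_glue:
  assumes wf: "lpo_wf P" "lpo_wf Q"
    and P: "S \<union> T = car P" "S \<inter> T = {}" "comp_related b P S T"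
    and Q: "S' \<union> T' = car Q" "S' \<inter> T' = {}" "comp_related b Q S' T'"
    and iS: "lpo_iso (restr P S) (restr Q S')" and iT: "lpo_iso (restr P T) (restr Q T')"
  shows "lpo_iso P Q"
proof -
  obtain g where g: "bij_betw g S S'" "\<forall>x\<in>S. lab Q (g x) = lab P x"
    "\<forall>x\<in>S. \<forall>y\<in>S. (x, y) \<in> rel P \<longleftrightarrow> (g x, g y) \<in> rel Q"
    using iS by (rule lpo_iso_restrE)
  obtain h where h: "bij_betw h T T'" "\<forall>x\<in>T. lab Q (h x) = lab P x"
    "\<forall>x\<in>T. \<forall>y\<in>T. (x, y) \<in> rel P \<longleftrightarrow> (h x, h y) \<in> rel Q"
    using iT by (rule lpo_iso_restrE)
  define f where "f x = (if x \<in> S then g x else h x)" for x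
  have fS: "x \<in> S \<Longrightarrow> f x = g x" and fT: "x \<in> T \<Longrightarrow> f x = h x" for x
    using P(2) unfolding f_def by auto
  have "bij_betw f S S'" "bij_betw f T T'"
    using g(1) h(1) fS fT by (auto cong: bij_betw_cong)
  then have "bij_betw f (car P) (car Q)"
    using P(1) Q(1,2) bij_betw_combine by metis
  moreover have "g x \<in> S'" if "x \<in> S" for x
    using g(1) that bij_betwE by blast
  moreover have "h x \<in> T'" if "x \<in> T" for x
    using h(1) that bij_betwE by blast
  moreover note PST = comp_related_rel[OF wf(1) P(3,2)] and QST = comp_related_rel[OF wf(2) Q(3,2)]
  ultimately show ?thesis
  proof (intro lpo_isoI[of f])
    fix x y assume "x \<in> car P" "y \<in> car P"
    then consider "x \<in> S" "y \<in> S" | "x \<in> S" "y \<in> T" | "x \<in> T" "y \<in> S" | "x \<in> T" "y \<in> T"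
      using P(1) by blast
    then show "(x, y) \<in> rel P \<longleftrightarrow> (f x, f y) \<in> rel Q"
      by cases (use g(3) h(3) PST QST \<open>\<And>x. x \<in> S \<Longrightarrow> g x \<in> S'\<close>
          \<open>\<And>x. x \<in> T \<Longrightarrow> h x \<in> T'\<close> in \<open>auto simp: fS fT\<close>)
  qed (use g(2) h(2) in \<open>auto simp: fS fT P(1)[symmetric]\<close>)
qed

lemma lpo_comp_partsE:
  obtains S T where "S \<union> T = car (lpo_comp b P Q)" "S \<inter> T = {}"
    "comp_related b (lpo_comp b P Q) S T"
    "lpo_iso P (restr (lpo_comp b P Q) S)" "lpo_iso Q (restr (lpo_comp b P Q) T)"
  by (rule that[OF car_lpo_comp_eq[symmetric] double_image_disjoint comp_related_lpo_comp
        lpo_iso_lpo_comp_left lpo_iso_lpo_comp_right])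

lemma lpo_iso_split:
  assumes "lpo_iso P Q"
    and Q: "S' \<union> T' = car Q" "S' \<inter> T' = {}" "comp_related b Q S' T'"
  obtains S T where "S \<union> T = car P" "S \<inter> T = {}" "comp_related b P S T"
    "lpo_iso (restr P S) (restr Q S')" "lpo_iso (restr P T) (restr Q T')"
proof -
  obtain f where f: "bij_betw f (car P) (car Q)" "\<forall>x\<in>car P. lab Q (f x) = lab P x"
    "\<forall>x\<in>car P. \<forall>y\<in>car P. (x, y) \<in> rel P \<longleftrightarrow> (f x, f y) \<in> rel Q"
    using assms(1) unfolding lpo_iso_def by blast
  define S where "S = {x \<in> car P. f x \<in> S'}"
  define T where "T = {x \<in> car P. f x \<in> T'}"
  have "f x \<in> S' \<union> T'" if "x \<in> car P" for x
    using f(1) that Q(1) bij_betwE by blast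
  then have ST: "S \<union> T = car P" "S \<inter> T = {}"
    using Q(2) unfolding S_def T_def by auto
  have fST: "f ` S = S'" "f ` T = T'"
    using f(1) Q(1) unfolding S_def T_def bij_betw_def by auto
  have "comp_related b P S T"
    using ST Q(3) unfolding fST[symmetric] by (intro comp_related_iso[OF f(3)]) auto
  moreover have "lpo_iso (restr P S) (restr Q S')" "lpo_iso (restr P T) (restr Q T')"
    using lpo_iso_restr[OF f, of S] lpo_iso_restr[OF f, of T] ST fST by auto
  ultimately show thesis
    using that ST by blast
qed

lemma pom_of_restr_eq_iff:
  "lpo_wf P \<Longrightarrow> S \<subseteq> car P \<Longrightarrow> pom_of (restr P S) = A \<longleftrightarrow> lpo_iso (restr P S) (rep A)"
  using pom_of_eq_iff[OF restr_wf rep_wf] by simp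

lemma pom_comp_split:
  assumes wf: "lpo_wf P" and eq: "pom_of P = pom_comp b A B"
  obtains S T where "S \<union> T = car P" "S \<inter> T = {}" "comp_related b P S T"
    "pom_of (restr P S) = A" "pom_of (restr P T) = B"
proof -
  let ?C = "lpo_comp b (rep A) (rep B)"
  obtain S' T' where C: "S' \<union> T' = car ?C" "S' \<inter> T' = {}" "comp_related b ?C S' T'"
    "lpo_iso (rep A) (restr ?C S')" "lpo_iso (rep B) (restr ?C T')"
    by (rule lpo_comp_partsE)
  have "lpo_wf ?C"
    by (simp add: lpo_comp_wf)
  then have "lpo_iso P ?C"
    using eq pom_of_eq_iff[OF wf] by (simp add: pom_comp_eq)
  then obtain S T where ST: "S \<union> T = car P" "S \<inter> T = {}" "comp_related b P S T"
    "lpo_iso (restr P S) (restr ?C S')" "lpo_iso (restr P T) (restr ?C T')"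
    using C(1-3) by (rule lpo_iso_split)
  moreover have "pom_of (restr P S) = A"
    using pom_of_restr_eq_iff[OF wf, of S A] ST(1) lpo_iso_trans[OF ST(4) lpo_iso_sym[OF C(4)]]
    by blast
  moreover have "pom_of (restr P T) = B"
    using pom_of_restr_eq_iff[OF wf, of T B] ST(1) lpo_iso_trans[OF ST(5) lpo_iso_sym[OF C(5)]]
    by blast
  ultimately show thesis
    using that by blast
qed

lemma pom_of_eq_pom_comp:
  assumes wf: "lpo_wf P" and ST: "S \<union> T = car P" "S \<inter> T = {}" "comp_related b P S T"
  shows "pom_of P = pom_comp b (pom_of (restr P S)) (pom_of (restr P T))"
proof -
  let ?A = "pom_of (restr P S)" and ?B = "pom_of (restr P T)"
  let ?C = "lpo_comp b (rep ?A) (rep ?B)"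
  obtain S' T' where C: "S' \<union> T' = car ?C" "S' \<inter> T' = {}" "comp_related b ?C S' T'"
    "lpo_iso (rep ?A) (restr ?C S')" "lpo_iso (rep ?B) (restr ?C T')"
    by (rule lpo_comp_partsE)
  have wC: "lpo_wf ?C"
    by (simp add: lpo_comp_wf)
  have "lpo_iso (restr P S) (rep ?A)" "lpo_iso (restr P T) (rep ?B)"
    using ST(1) pom_of_restr_eq_iff[OF wf] by blast+
  then have "lpo_iso (restr P S) (restr ?C S')" "lpo_iso (restr P T) (restr ?C T')"
    using C(4,5) by (blast intro: lpo_iso_trans)+
  then have "lpo_iso P ?C"
    using lpo_iso_glue[OF wf wC ST C(1-3)] by blast
  then show ?thesis
    using wf wC by (simp add: pom_comp_eq pom_of_eq_iff)
qed

lemma pom_of_eq_pom_comp_iff: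
  assumes "lpo_wf P"
  shows "pom_of P = pom_comp b A B \<longleftrightarrow> (\<exists>S T. S \<union> T = car P \<and> S \<inter> T = {} \<and>
    comp_related b P S T \<and> pom_of (restr P S) = A \<and> pom_of (restr P T) = B)"
  using pom_comp_split[OF assms] pom_of_eq_pom_comp[OF assms] by metis

lemma pom_comp_one_right [simp]: "pom_comp b A pom_one = A"
proof -
  have "pom_of (rep A) = pom_comp b (pom_of (restr (rep A) (car (rep A)))) (pom_of (restr (rep A) {}))"
    by (rule pom_of_eq_pom_comp) (auto simp: comp_related_def)
  moreover have "pom_of (restr (rep A) {}) = pom_one"
    by (simp add: pom_of_restr_eq_pom_one_iff)
  ultimately show ?thesis
    by (simp add: restr_car)
qed

lemma pom_comp_one_left [simp]: "pom_comp b pom_one A = A"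
proof -
  have "pom_of (rep A) = pom_comp b (pom_of (restr (rep A) {})) (pom_of (restr (rep A) (car (rep A))))"
    by (rule pom_of_eq_pom_comp) (auto simp: comp_related_def)
  moreover have "pom_of (restr (rep A) {}) = pom_one"
    by (simp add: pom_of_restr_eq_pom_one_iff)
  ultimately show ?thesis
    by (simp add: restr_car)
qed

lemma pom_comp_eq_pom_one_iff: "pom_comp b A B = pom_one \<longleftrightarrow> A = pom_one \<and> B = pom_one"
proof -
  have "pom_comp b A B = pom_one \<longleftrightarrow> car (lpo_comp b (rep A) (rep B)) = {}"
    by (simp add: pom_comp_eq pom_of_eq_pom_one_iff lpo_comp_wf)
  also have "\<dots> \<longleftrightarrow> car (rep A) = {} \<and> car (rep B) = {}"
    by (simp add: car_lpo_comp_eq)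
  finally show ?thesis
    by (simp add: car_rep_eq_empty_iff)
qed

lemma pom_seq_eq_pom_comp: "pom_seq = pom_comp True"
  and pom_par_eq_pom_comp: "pom_par = pom_comp False"
  unfolding pom_comp_def by simp_all

definition comp_list :: "bool \<Rightarrow> 'a pomset list \<Rightarrow> 'a pomset" where
  "comp_list b Us = foldr (pom_comp b) Us pom_one"

lemma comp_list_simps [simp]:
  "comp_list b [] = pom_one" "comp_list b (U # Us) = pom_comp b U (comp_list b Us)"
  unfolding comp_list_def by simp_all

lemma seq_list_eq: "seq_list = comp_list True"
  and par_list_eq: "par_list = comp_list False"
  unfolding seq_list_def par_list_def comp_list_def pom_comp_def by simp_all

lemma comp_list_eq_pom_one_iff: "comp_list b Us = pom_one \<longleftrightarrow> (\<forall>U\<in>set Us. U = pom_one)"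
  by (induction Us) (auto simp: pom_comp_eq_pom_one_iff)

definition comp_partition :: "bool \<Rightarrow> 'a lpo \<Rightarrow> nat set list \<Rightarrow> bool" where
  "comp_partition b P Bs \<longleftrightarrow>
     \<Union>(set Bs) = car P \<and> sorted_wrt (\<lambda>S T. comp_related b P S T \<and> S \<inter> T = {}) Bs"

lemma comp_partition_Cons:
  "comp_partition b P (S # Bs) \<longleftrightarrow> S \<union> \<Union>(set Bs) = car P \<and> S \<inter> \<Union>(set Bs) = {} \<and>
     comp_related b P S (\<Union>(set Bs)) \<and> comp_partition b (restr P (\<Union>(set Bs))) Bs"
proof -
  have "comp_related b (restr P (\<Union>(set Bs))) S' T' \<longleftrightarrow> comp_related b P S' T'"
    if "S' \<in> set Bs" "T' \<in> set Bs" for S' T'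
    using that by (simp add: comp_related_restr Union_upper)
  then have "sorted_wrt (\<lambda>S T. comp_related b (restr P (\<Union>(set Bs))) S T \<and> S \<inter> T = {}) Bs
    \<longleftrightarrow> sorted_wrt (\<lambda>S T. comp_related b P S T \<and> S \<inter> T = {}) Bs"
    by (metis (no_types, lifting) sorted_wrt_mono_rel)
  moreover have "(\<forall>T\<in>set Bs. comp_related b P S T) \<longleftrightarrow> comp_related b P S (\<Union>(set Bs))"
    by (auto intro: comp_related_Union comp_related_mono)
  ultimately show ?thesis
    unfolding comp_partition_def by auto
qed

lemma ex_comp_partition_Cons:
  "(\<exists>Bs. U # Us = map (\<lambda>B. pom_of (restr P B)) Bs \<and> comp_partition b P Bs) \<longleftrightarrow>
    (\<exists>S T. S \<union> T = car P \<and> S \<inter> T = {} \<and> comp_related b P S T \<and> pom_of (restr P S) = U \<and>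
      (\<exists>Bs. Us = map (\<lambda>B. pom_of (restr (restr P T) B)) Bs \<and> comp_partition b (restr P T) Bs))"
proof
  assume "\<exists>Bs. U # Us = map (\<lambda>B. pom_of (restr P B)) Bs \<and> comp_partition b P Bs"
  then obtain S Bs where "U = pom_of (restr P S)" "Us = map (\<lambda>B. pom_of (restr P B)) Bs"
    "comp_partition b P (S # Bs)"
    by (auto simp: Cons_eq_map_conv)
  moreover have "pom_of (restr (restr P (\<Union>(set Bs))) B) = pom_of (restr P B)" if "B \<in> set Bs" for B
    using that by (metis Union_upper restr_restr)
  ultimately show "\<exists>S T. S \<union> T = car P \<and> S \<inter> T = {} \<and> comp_related b P S T \<and>
    pom_of (restr P S) = U \<and>
    (\<exists>Bs. Us = map (\<lambda>B. pom_of (restr (restr P T) B)) Bs \<and> comp_partition b (restr P T) Bs)"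
    by - (rule exI[of _ S], rule exI[of _ "\<Union>(set Bs)"], auto simp: comp_partition_Cons)
next
  assume "\<exists>S T. S \<union> T = car P \<and> S \<inter> T = {} \<and> comp_related b P S T \<and>
    pom_of (restr P S) = U \<and>
    (\<exists>Bs. Us = map (\<lambda>B. pom_of (restr (restr P T) B)) Bs \<and> comp_partition b (restr P T) Bs)"
  then obtain S T Bs where "S \<union> T = car P" "S \<inter> T = {}" "comp_related b P S T"
    "pom_of (restr P S) = U" "Us = map (\<lambda>B. pom_of (restr (restr P T) B)) Bs"
    "comp_partition b (restr P T) Bs"
    by blast
  moreover from this have "\<Union>(set Bs) = T"
    unfolding comp_partition_def by simp
  moreover from this have "pom_of (restr (restr P T) B) = pom_of (restr P B)" if "B \<in> set Bs" for B
    using that by (metis Union_upper restr_restr)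
  ultimately show "\<exists>Bs. U # Us = map (\<lambda>B. pom_of (restr P B)) Bs \<and> comp_partition b P Bs"
    by (intro exI[of _ "S # Bs"]) (auto simp: comp_partition_Cons)
qed

lemma pom_of_eq_comp_list_iff:
  assumes "lpo_wf P"
  shows "pom_of P = comp_list b Us \<longleftrightarrow>
    (\<exists>Bs. Us = map (\<lambda>B. pom_of (restr P B)) Bs \<and> comp_partition b P Bs)"
  using assms
proof (induction Us arbitrary: P)
  case Nil
  then show ?case
    by (auto simp: pom_of_eq_pom_one_iff comp_partition_def)
next
  case (Cons U Us)
  have "(S \<union> T = car P \<and> S \<inter> T = {} \<and> comp_related b P S T \<and> pom_of (restr P S) = U \<and>
      pom_of (restr P T) = comp_list b Us) \<longleftrightarrow>
    (S \<union> T = car P \<and> S \<inter> T = {} \<and> comp_related b P S T \<and> pom_of (restr P S) = U \<and>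
      (\<exists>Bs. Us = map (\<lambda>B. pom_of (restr (restr P T) B)) Bs \<and> comp_partition b (restr P T) Bs))"
    for S T
    using Cons.IH[OF restr_wf[OF Cons.prems], of T] by auto
  then show ?case
    unfolding comp_list_simps(2) pom_of_eq_pom_comp_iff[OF Cons.prems] ex_comp_partition_Cons
    by (simp only:)
qed

lemma comp_partition_pairwise:
  assumes "comp_partition b P Bs" "S \<in> set Bs" "T \<in> set Bs" "S \<noteq> T"
  shows "S \<inter> T = {} \<and> (comp_related b P S T \<or> comp_related b P T S)"
proof -
  have sorted: "sorted_wrt (\<lambda>S T. comp_related b P S T \<and> S \<inter> T = {}) Bs"
    using assms(1) unfolding comp_partition_def by blast
  obtain i j where ij: "i < length Bs" "j < length Bs" "S = Bs ! i" "T = Bs ! j"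
    using assms(2,3) by (metis in_set_conv_nth)
  then consider "i < j" | "j < i"
    using assms(4) by (metis linorder_neqE_nat)
  then show ?thesis
  proof cases
    case 1
    then show ?thesis
      using sorted_wrt_nth_less[OF sorted 1 ij(2)] ij(3,4) by blast
  next
    case 2
    then show ?thesis
      using sorted_wrt_nth_less[OF sorted 2 ij(1)] ij(3,4) by blast
  qed
qed

lemma comp_partition_nth_disjoint:
  assumes "comp_partition b P Bs" "i < length Bs" "j < length Bs" "i \<noteq> j"
  shows "Bs ! i \<inter> Bs ! j = {}"
proof -
  have sorted: "sorted_wrt (\<lambda>S T. comp_related b P S T \<and> S \<inter> T = {}) Bs"
    using assms(1) unfolding comp_partition_def by blast
  consider "i < j" | "j < i"
    using assms(4) by (metis linorder_neqE_nat)
  then show ?thesis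
    by cases (use sorted_wrt_nth_less[OF sorted] assms(2,3) in blast)+
qed

lemma comp_partition_distinct:
  assumes "comp_partition b P Bs" "{} \<notin> set Bs"
  shows "distinct Bs"
proof -
  have "sorted_wrt (\<lambda>S T. comp_related b P S T \<and> S \<inter> T = {}) Bs"
    using assms(1) unfolding comp_partition_def by blast
  then show ?thesis
    using assms(2) by (induction Bs) auto
qed

lemma comp_partition_length:
  assumes wf: "lpo_wf P" and Bs: "comp_partition b P Bs" "{} \<notin> set Bs"
  shows "length Bs \<le> card (car P)"
proof -
  define pick where "pick B = (SOME x. x \<in> B)" for B :: "nat set"
  have pick: "pick B \<in> B" if "B \<in> set Bs" for B
    unfolding pick_def using that Bs(2) by (metis ex_in_conv someI_ex)
  have "inj_on pick (set Bs)"
    using pick comp_partition_pairwise[OF Bs(1)] by (metis disjoint_iff inj_onI)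
  moreover have "pick ` set Bs \<subseteq> car P"
    using pick Bs(1) unfolding comp_partition_def by blast
  ultimately have "card (set Bs) \<le> card (car P)"
    using wf card_inj_on_le unfolding lpo_wf_def by blast
  then show ?thesis
    using distinct_card[OF comp_partition_distinct[OF Bs]] by simp
qed

section \<open>Comparability and incomparability graphs\<close>

text \<open>\<open>link True P S\<close> is the incomparability graph and \<open>link False P S\<close> the comparability
  graph of \<open>P\<close> on \<open>S\<close>. The factors of a maximal sequential (parallel) decomposition turn out
  to be the connected components of the former (latter).\<close>

definition link :: "bool \<Rightarrow> 'a lpo \<Rightarrow> nat set \<Rightarrow> (nat \<times> nat) set" where
  "link b P S = {(x, y). x \<in> S \<and> y \<in> S \<and> x \<noteq> y \<and>
     (if b then (x, y) \<notin> rel P \<and> (y, x) \<notin> rel P else (x, y) \<in> rel P \<or> (y, x) \<in> rel P)}"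

definition link_connected :: "bool \<Rightarrow> 'a lpo \<Rightarrow> nat set \<Rightarrow> bool" where
  "link_connected b P S \<longleftrightarrow> (\<forall>x\<in>S. \<forall>y\<in>S. (x, y) \<in> (link b P S)\<^sup>*)"

definition link_comp :: "bool \<Rightarrow> 'a lpo \<Rightarrow> nat \<Rightarrow> nat set" where
  "link_comp b P x = {y. (x, y) \<in> (link b P (car P))\<^sup>*}"

definition link_comps :: "bool \<Rightarrow> 'a lpo \<Rightarrow> nat set set" where
  "link_comps b P = link_comp b P ` car P"

lemma sym_link: "sym (link b P S)"
  unfolding link_def sym_def by auto

lemma rtrancl_link_sym: "(x, y) \<in> (link b P S)\<^sup>* \<Longrightarrow> (y, x) \<in> (link b P S)\<^sup>*"
  using sym_rtrancl[OF sym_link] by (rule symD)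

lemma link_mono: "S \<subseteq> S' \<Longrightarrow> link b P S \<subseteq> link b P S'"
  unfolding link_def by auto

lemma link_restr: "S \<subseteq> R \<Longrightarrow> link b (restr P R) S = link b P S"
  unfolding link_def by auto

lemma link_connected_restr: "S \<subseteq> R \<Longrightarrow> link_connected b (restr P R) S \<longleftrightarrow> link_connected b P S"
  unfolding link_connected_def by (simp add: link_restr)

lemma link_connected_card_le_1:
  assumes "finite S" "card S \<le> 1"
  shows "link_connected b P S"
proof -
  have "\<forall>x\<in>S. \<forall>y\<in>S. x = y"
    using assms card_le_Suc0_iff_eq by auto
  then show ?thesis
    unfolding link_connected_def by auto
qed

lemma rtrancl_link_closed:
  assumes "\<And>x y. x \<in> C \<Longrightarrow> (x, y) \<in> link b P S \<Longrightarrow> y \<in> C" "x \<in> C" "(x, y) \<in> (link b P S)\<^sup>*"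
  shows "y \<in> C"
  using assms(3,2) by induction (use assms(1) in blast)+

lemma rtrancl_link_in: "x \<in> S \<Longrightarrow> (x, y) \<in> (link b P S)\<^sup>* \<Longrightarrow> y \<in> S"
  using rtrancl_link_closed[of S] unfolding link_def by blast

lemma link_comp_subset: "x \<in> car P \<Longrightarrow> link_comp b P x \<subseteq> car P"
  unfolding link_comp_def using rtrancl_link_in by blast

lemma link_comp_self: "x \<in> link_comp b P x"
  unfolding link_comp_def by simp

lemma link_connected_link_comps:
  "link_connected b P (car P) \<Longrightarrow> C \<in> link_comps b P \<Longrightarrow> C = car P"
  unfolding link_connected_def link_comps_def using link_comp_subset by (fastforce simp: link_comp_def)

lemma comp_related_not_link:
  "comp_related b P S T \<Longrightarrow> x \<in> S \<Longrightarrow> y \<in> T \<Longrightarrow> (x, y) \<notin> link b P R"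
  unfolding comp_related_def link_def by (cases b) auto

lemma comp_related_link:
  "comp_related b P S T \<Longrightarrow> S \<inter> T = {} \<Longrightarrow> x \<in> S \<Longrightarrow> y \<in> T \<Longrightarrow> S \<union> T \<subseteq> R \<Longrightarrow>
    (x, y) \<in> link (\<not> b) P R"
  unfolding comp_related_def link_def by (cases b) auto

lemma comp_split_not_link_connected:
  assumes "S \<union> T = R" "S \<inter> T = {}" "S \<noteq> {}" "T \<noteq> {}" "comp_related b P S T"
  shows "\<not> link_connected b P R"
proof -
  obtain x y where "x \<in> S" "y \<in> T"
    using assms(3,4) by blast
  moreover have "(x, y) \<notin> (link b P R)\<^sup>*"
  proof
    assume "(x, y) \<in> (link b P R)\<^sup>*"
    then have "y \<in> S"
      using rtrancl_link_closed[of S b P R x y] \<open>x \<in> S\<close> assms(1,5) comp_related_not_link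
      unfolding link_def by blast
    then show False
      using \<open>y \<in> T\<close> assms(2) by blast
  qed
  ultimately show ?thesis
    using assms(1) unfolding link_connected_def by blast
qed

lemma link_connected_two_parts:
  assumes "S \<union> T = R" "S \<noteq> {}" "T \<noteq> {}" "\<And>s t. s \<in> S \<Longrightarrow> t \<in> T \<Longrightarrow> (s, t) \<in> link b P R"
  shows "link_connected b P R"
  unfolding link_connected_def
proof (intro ballI)
  fix x z assume "x \<in> R" "z \<in> R"
  obtain s0 t0 where "s0 \<in> S" "t0 \<in> T"
    using assms(2,3) by blast
  have "(t, s) \<in> link b P R" if "s \<in> S" "t \<in> T" for s t
    using assms(4)[OF that] sym_link by (metis symD)
  then show "(x, z) \<in> (link b P R)\<^sup>*"
    using \<open>x \<in> R\<close> \<open>z \<in> R\<close> assms(1,4) \<open>s0 \<in> S\<close> \<open>t0 \<in> T\<close>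
    by (metis UnE converse_rtrancl_into_rtrancl r_into_rtrancl)
qed

lemma comp_split_link_connected:
  assumes "S \<union> T = R" "S \<inter> T = {}" "S \<noteq> {}" "T \<noteq> {}" "comp_related b P S T"
  shows "link_connected (\<not> b) P R"
  using assms by (intro link_connected_two_parts[OF assms(1,3,4)]) (auto intro: comp_related_link)

lemma comp_partition_block_closed:
  assumes "comp_partition b P Bs" "B \<in> set Bs" "x \<in> B" "(x, y) \<in> (link b P (car P))\<^sup>*"
  shows "y \<in> B"
proof (rule rtrancl_link_closed[OF _ assms(3,4)])
  fix u v assume "u \<in> B" "(u, v) \<in> link b P (car P)"
  moreover from this have "v \<in> car P \<Longrightarrow> v \<in> B"
    using assms(1,2) comp_partition_pairwise[OF assms(1,2)] comp_related_not_link sym_link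
    unfolding comp_partition_def by (metis UnionE symD)
  ultimately show "v \<in> B"
    using assms(1) unfolding link_def comp_partition_def by auto
qed

lemma link_connected_block_eq_link_comp:
  assumes "comp_partition b P Bs" "B \<in> set Bs" "x \<in> B" "link_connected b P B"
  shows "B = link_comp b P x"
proof
  have "B \<subseteq> car P"
    using assms(1,2) unfolding comp_partition_def by blast
  then show "B \<subseteq> link_comp b P x"
    using assms(3,4) rtrancl_mono[OF link_mono] unfolding link_connected_def link_comp_def by blast
  show "link_comp b P x \<subseteq> B"
    using comp_partition_block_closed[OF assms(1-3)] unfolding link_comp_def by blast
qed

lemma lpo_has_minimal:
  assumes "lpo_wf P" "S \<subseteq> car P" "S \<noteq> {}"
  obtains m where "m \<in> S" "\<And>z. z \<in> S \<Longrightarrow> (z, m) \<in> rel P \<Longrightarrow> z = m"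
proof -
  let ?R = "\<lambda>x y. (x, y) \<in> rel P \<and> x \<noteq> y"
  have "finite S"
    using assms(1,2) finite_subset unfolding lpo_wf_def by blast
  moreover have "asymp_on S ?R" "transp_on S ?R"
    using assms(1) unfolding lpo_wf_def asymp_on_def transp_on_def antisym_def trans_def by blast+
  ultimately obtain m where "m \<in> S" "\<forall>z\<in>S. z \<noteq> m \<longrightarrow> \<not> ?R z m"
    using Finite_Set.bex_min_element[of S ?R] assms(3) by blast
  then show thesis
    using that by blast
qed

lemma comparability_disconnected_split:
  assumes xy: "x \<in> S" "y \<in> S" "(x, y) \<notin> (link False P S)\<^sup>*"
  obtains S1 S2 where "S1 \<union> S2 = S" "S1 \<inter> S2 = {}" "S1 \<noteq> {}" "S2 \<noteq> {}"
    "comp_related False P S1 S2"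
proof -
  define C where "C = {z. (x, z) \<in> (link False P S)\<^sup>*}"
  have C: "C \<subseteq> S" "x \<in> C" "y \<in> S - C"
    using rtrancl_link_in xy unfolding C_def by auto
  have "z2 \<in> C" if "z1 \<in> C" "z2 \<in> S - C" "(z1, z2) \<in> rel P \<or> (z2, z1) \<in> rel P" for z1 z2
  proof -
    have "(z1, z2) \<in> link False P S"
      using that C(1) unfolding link_def by auto
    then show ?thesis
      using that(1) unfolding C_def by (auto intro: rtrancl_into_rtrancl)
  qed
  then have "comp_related False P C (S - C)"
    unfolding comp_related_def by auto
  then show thesis
    using C by (intro that[of C "S - C"]) auto
qed

lemma incomparability_disconnected_split:
  assumes wf: "lpo_wf P" and S: "S \<subseteq> car P"
    and xy: "x \<in> S" "y \<in> S" "(x, y) \<notin> (link True P S)\<^sup>*"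
  obtains S1 S2 where "S1 \<union> S2 = S" "S1 \<inter> S2 = {}" "S1 \<noteq> {}" "S2 \<noteq> {}"
    "comp_related True P S1 S2"
proof -
  text \<open>Take \<open>C\<close> to be the incomparability component of a minimal element \<open>m\<close>. Along a path
    of incomparable steps inside \<open>C\<close>, the relation to a point outside \<open>C\<close> cannot flip, so
    all of \<open>C\<close> lies below all of \<open>S - C\<close>.\<close>
  obtain m where m: "m \<in> S" "\<And>z. z \<in> S \<Longrightarrow> (z, m) \<in> rel P \<Longrightarrow> z = m"
    using lpo_has_minimal[OF wf S] xy(1) by blast
  define C where "C = {z. (m, z) \<in> (link True P S)\<^sup>*}"
  have C: "C \<subseteq> S" "m \<in> C"
    using rtrancl_link_in m(1) unfolding C_def by auto
  have "S - C \<noteq> {}"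
  proof
    assume "S - C = {}"
    then have "(x, m) \<in> (link True P S)\<^sup>*" "(m, y) \<in> (link True P S)\<^sup>*"
      using xy(1,2) rtrancl_link_sym unfolding C_def by blast+
    then show False
      using xy(3) by (meson rtrancl_trans)
  qed
  have comparable: "(c, t) \<in> rel P \<or> (t, c) \<in> rel P" if "c \<in> C" "t \<in> S - C" for c t
  proof -
    have "(c, t) \<notin> link True P S"
      using that unfolding C_def by (auto intro: rtrancl_into_rtrancl)
    then show ?thesis
      using that C(1) unfolding link_def by auto
  qed
  have below: "\<forall>t\<in>S - C. (c, t) \<in> rel P" if "(m, c) \<in> (link True P S)\<^sup>*" for c
    using that
  proof (induction rule: rtrancl_induct)
    case base
    show ?case
      using comparable[OF C(2)] m(2) by blast
  next
    case (step c c')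
    have "c' \<in> C"
      using step(1,2) unfolding C_def by (auto intro: rtrancl_into_rtrancl)
    moreover have "(c, c') \<notin> rel P"
      using step(2) unfolding link_def by auto
    ultimately show ?case
      using step(3) comparable wf unfolding lpo_wf_def trans_def by blast
  qed
  have "comp_related True P C (S - C)"
    using below unfolding comp_related_def C_def by auto
  then show thesis
    using C \<open>S - C \<noteq> {}\<close> by (intro that[of C "S - C"]) auto
qed

lemma disconnected_split:
  assumes wf: "lpo_wf P" and S: "S \<subseteq> car P" and disconnected: "\<not> link_connected b P S"
  obtains S1 S2 where "S1 \<union> S2 = S" "S1 \<inter> S2 = {}" "S1 \<noteq> {}" "S2 \<noteq> {}" "comp_related b P S1 S2"
proof -
  obtain x y where xy: "x \<in> S" "y \<in> S" "(x, y) \<notin> (link b P S)\<^sup>*"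
    using disconnected unfolding link_connected_def by blast
  show thesis
  proof (cases b)
    case True
    then have path: "(x, y) \<notin> (link True P S)\<^sup>*"
      using xy(3) by simp
    obtain S1 S2 where "S1 \<union> S2 = S" "S1 \<inter> S2 = {}" "S1 \<noteq> {}" "S2 \<noteq> {}"
      "comp_related True P S1 S2"
      by (rule incomparability_disconnected_split[OF wf S xy(1,2) path])
    then show thesis
      using that True by simp
  next
    case False
    then have path: "(x, y) \<notin> (link False P S)\<^sup>*"
      using xy(3) by simp
    obtain S1 S2 where "S1 \<union> S2 = S" "S1 \<inter> S2 = {}" "S1 \<noteq> {}" "S2 \<noteq> {}"
      "comp_related False P S1 S2"
      by (rule comparability_disconnected_split[OF xy(1,2) path])
    then show thesis
      using that False by simp
  qed
qed

lemma comp_partition_split_block: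
  assumes "comp_partition b P (Bs1 @ B # Bs2)"
    and "S1 \<union> S2 = B" "S1 \<inter> S2 = {}" "comp_related b P S1 S2"
  shows "comp_partition b P (Bs1 @ S1 # S2 # Bs2)"
proof -
  define R where "R = (\<lambda>S T. comp_related b P S T \<and> S \<inter> T = {})"
  have R_mono: "R S' T'" if "R S T" "S' \<subseteq> S" "T' \<subseteq> T" for S T S' T'
    using that comp_related_mono unfolding R_def by blast
  have B: "S1 \<subseteq> B" "S2 \<subseteq> B" "R S1 S2"
    using assms(2-4) unfolding R_def by blast+
  have "sorted_wrt R (Bs1 @ B # Bs2)"
    using assms(1) unfolding comp_partition_def R_def by simp
  then have "sorted_wrt R Bs1" "sorted_wrt R Bs2" "\<forall>C\<in>set Bs2. R B C"
    "\<forall>A\<in>set Bs1. R A B \<and> (\<forall>C\<in>set Bs2. R A C)"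
    by (simp_all add: sorted_wrt_append)
  moreover have "R S1 C" "R S2 C" if "C \<in> set Bs2" for C
    using R_mono[OF _ B(1) subset_refl] R_mono[OF _ B(2) subset_refl] that
      \<open>\<forall>C\<in>set Bs2. R B C\<close> by blast+
  moreover have "R A S1" "R A S2" if "A \<in> set Bs1" for A
    using R_mono[OF _ subset_refl B(1)] R_mono[OF _ subset_refl B(2)] that
      \<open>\<forall>A\<in>set Bs1. R A B \<and> (\<forall>C\<in>set Bs2. R A C)\<close> by blast+
  ultimately have "sorted_wrt R (Bs1 @ S1 # S2 # Bs2)"
    using B(3) by (auto simp: sorted_wrt_append)
  moreover have "\<Union>(set (Bs1 @ S1 # S2 # Bs2)) = \<Union>(set (Bs1 @ B # Bs2))"
    using assms(2) by auto
  ultimately show ?thesis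
    using assms(1) unfolding comp_partition_def R_def by simp
qed

definition max_comp_partition :: "bool \<Rightarrow> 'a lpo \<Rightarrow> nat set list \<Rightarrow> bool" where
  "max_comp_partition b P Bs \<longleftrightarrow> comp_partition b P Bs \<and> {} \<notin> set Bs \<and>
     (\<forall>Bs'. comp_partition b P Bs' \<and> {} \<notin> set Bs' \<longrightarrow> length Bs' \<le> length Bs)"

lemma max_comp_partition_exists:
  assumes "lpo_wf P"
  obtains Bs where "max_comp_partition b P Bs"
proof -
  let ?Q = "\<lambda>Bs. comp_partition b P Bs \<and> {} \<notin> set Bs"
  have "?Q (if car P = {} then [] else [car P])"
    unfolding comp_partition_def by auto
  moreover have "\<forall>Bs. ?Q Bs \<longrightarrow> length Bs < card (car P) + 1"
    using comp_partition_length[OF assms, of b] by (auto simp: less_Suc_eq_le)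
  ultimately obtain Bs where "?Q Bs" "\<forall>Bs'. ?Q Bs' \<longrightarrow> length Bs' \<le> length Bs"
    using Lattices_Big.ex_has_greatest_nat[of ?Q _ length] by blast
  then show thesis
    using that unfolding max_comp_partition_def by blast
qed

lemma max_comp_partition_block:
  assumes wf: "lpo_wf P" and max: "max_comp_partition b P Bs" and B: "B \<in> set Bs" "x \<in> B"
  shows "B = link_comp b P x"
proof (rule link_connected_block_eq_link_comp[OF _ B])
  show part: "comp_partition b P Bs"
    using max unfolding max_comp_partition_def by blast
  show "link_connected b P B"
  proof (rule ccontr)
    assume "\<not> link_connected b P B"
    moreover have "B \<subseteq> car P"
      using part B(1) unfolding comp_partition_def by blast
    ultimately obtain S1 S2 where S12: "S1 \<union> S2 = B" "S1 \<inter> S2 = {}" "S1 \<noteq> {}" "S2 \<noteq> {}"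
      "comp_related b P S1 S2"
      using disconnected_split[OF wf] by metis
    obtain Bs1 Bs2 where Bs: "Bs = Bs1 @ B # Bs2"
      using split_list[OF B(1)] by blast
    have "comp_partition b P (Bs1 @ S1 # S2 # Bs2)"
      using comp_partition_split_block[OF _ S12(1,2,5)] part Bs by blast
    moreover have "{} \<notin> set (Bs1 @ S1 # S2 # Bs2)"
      using max S12(3,4) Bs unfolding max_comp_partition_def by auto
    ultimately show False
      using max Bs unfolding max_comp_partition_def by fastforce
  qed
qed

lemma max_comp_partition_blocks:
  assumes wf: "lpo_wf P" and max: "max_comp_partition b P Bs"
  shows "set Bs = link_comps b P"
proof -
  have part: "comp_partition b P Bs" "{} \<notin> set Bs"
    using max unfolding max_comp_partition_def by blast+
  show ?thesis
  proof
    show "set Bs \<subseteq> link_comps b P"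
    proof
      fix B assume B: "B \<in> set Bs"
      then obtain x where "x \<in> B"
        using part(2) by (metis ex_in_conv)
      moreover have "B \<subseteq> car P"
        using part(1) B unfolding comp_partition_def by blast
      ultimately show "B \<in> link_comps b P"
        using max_comp_partition_block[OF wf max B] unfolding link_comps_def by blast
    qed
    show "link_comps b P \<subseteq> set Bs"
    proof
      fix C assume "C \<in> link_comps b P"
      then obtain x where "x \<in> car P" "C = link_comp b P x"
        unfolding link_comps_def by blast
      moreover obtain B where "B \<in> set Bs" "x \<in> B"
        using part(1) \<open>x \<in> car P\<close> unfolding comp_partition_def by blast
      ultimately show "C \<in> set Bs"
        using max_comp_partition_block[OF wf max] by metis
    qed
  qed
qed

lemma max_comp_partition_disconnected:
  assumes wf: "lpo_wf P" and max: "max_comp_partition b P Bs"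
    and disconnected: "\<not> link_connected b P (car P)"
  shows max_comp_partition_length_gt_1: "1 < length Bs"
    and max_comp_partition_psubset: "B \<in> set Bs \<Longrightarrow> B \<subset> car P"
proof -
  obtain x y where xy: "x \<in> car P" "y \<in> car P" "y \<notin> link_comp b P x"
    using disconnected unfolding link_connected_def link_comp_def by blast
  have part: "comp_partition b P Bs" "{} \<notin> set Bs"
    using max unfolding max_comp_partition_def by blast+
  have comps: "link_comp b P x \<in> set Bs" "link_comp b P y \<in> set Bs"
    "link_comp b P x \<noteq> link_comp b P y"
    using xy link_comp_self[of y b P] max_comp_partition_blocks[OF wf max]
    unfolding link_comps_def by auto
  then have "card {link_comp b P x, link_comp b P y} \<le> card (set Bs)"
    by (intro card_mono) auto
  then show "1 < length Bs"
    using comps(3) card_length[of Bs] by simp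
  assume B: "B \<in> set Bs"
  obtain B' where B': "B' \<in> set Bs" "B' \<noteq> B"
    using comps by blast
  then have "B \<inter> B' = {}" "B' \<noteq> {}" "B \<subseteq> car P" "B' \<subseteq> car P"
    using comp_partition_pairwise[OF part(1) B] part B unfolding comp_partition_def by auto
  then show "B \<subset> car P"
    by blast
qed

lemma list_all2_in_set1: "list_all2 R xs ys \<Longrightarrow> x \<in> set xs \<Longrightarrow> \<exists>y\<in>set ys. R x y"
  and list_all2_in_set2: "list_all2 R xs ys \<Longrightarrow> y \<in> set ys \<Longrightarrow> \<exists>x\<in>set xs. R x y"
  by (induction rule: list_all2_induct) auto

lemma list_all2_functional_set_eq:
  assumes "list_all2 R xs ys" "list_all2 R' xs' ys'" "set xs = set xs'"
    and "\<And>x y y'. R x y \<Longrightarrow> R' x y' \<Longrightarrow> y' = y"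
  shows "set ys = set ys'"
proof (intro equalityI subsetI)
  fix y assume "y \<in> set ys"
  then obtain x where "x \<in> set xs'" "R x y"
    using list_all2_in_set2[OF assms(1)] assms(3) by blast
  moreover obtain y' where "y' \<in> set ys'" "R' x y'"
    using list_all2_in_set1[OF assms(2) \<open>x \<in> set xs'\<close>] by blast
  ultimately show "y \<in> set ys'"
    using assms(4) by blast
next
  fix y' assume "y' \<in> set ys'"
  then obtain x where "x \<in> set xs" "R' x y'"
    using list_all2_in_set2[OF assms(2)] assms(3) by blast
  moreover obtain y where "y \<in> set ys" "R x y"
    using list_all2_in_set1[OF assms(1) \<open>x \<in> set xs\<close>] by blast
  ultimately show "y' \<in> set ys"
    using assms(4) by blast
qed

section \<open>Depth\<close>

definition max_comp_list :: "bool \<Rightarrow> 'a pomset \<Rightarrow> 'a pomset list \<Rightarrow> bool" where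
  "max_comp_list b U Us \<longleftrightarrow> length Us > 1 \<and> (\<forall>Ui\<in>set Us. Ui \<noteq> pom_one) \<and> U = comp_list b Us \<and>
     \<not> (\<exists>Vs. length Vs > length Us \<and> (\<forall>Vi\<in>set Vs. Vi \<noteq> pom_one) \<and> U = comp_list b Vs)"

lemma has_depth_compI:
  assumes "max_comp_list b U Us" "list_all2 has_depth Us ds"
  shows "has_depth U (Max (set ds) + 1)"
proof (cases b)
  case True
  show ?thesis
    by (rule depth_seq[where Us = Us])
      (use assms True in \<open>auto simp: max_comp_list_def seq_list_eq list_all2_conv_all_nth\<close>)
next
  case False
  show ?thesis
    by (rule depth_par[where Us = Us])
      (use assms False in \<open>auto simp: max_comp_list_def par_list_eq list_all2_conv_all_nth\<close>)
qed

lemma has_depth_induct [consumes 1, case_names one prim comp]: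
  assumes "has_depth U d" "P pom_one 0" "\<And>a. P (pom_prim a) 1"
    "\<And>b U Us ds. max_comp_list b U Us \<Longrightarrow> list_all2 (\<lambda>U d. has_depth U d \<and> P U d) Us ds \<Longrightarrow>
      P U (Max (set ds) + 1)"
  shows "P U d"
  using assms(1)
proof (induction rule: has_depth.induct)
  case (depth_seq Us U ds)
  then show ?case
    using assms(4)[of True U Us ds] by (simp add: max_comp_list_def seq_list_eq list_all2_conv_all_nth)
next
  case (depth_par Us U ds)
  then show ?case
    using assms(4)[of False U Us ds] by (simp add: max_comp_list_def par_list_eq list_all2_conv_all_nth)
qed (use assms(2,3) in auto)

lemma has_depth_cases [consumes 1, case_names one prim comp]:
  assumes "has_depth U d"
  obtains "U = pom_one" "d = 0"
  | a where "U = pom_prim a" "d = 1"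
  | b Us ds where "max_comp_list b U Us" "list_all2 has_depth Us ds" "d = Max (set ds) + 1"
  using assms
proof (cases rule: has_depth.cases)
  case (depth_seq Us ds)
  then show thesis
    using that(3)[of True Us ds] by (simp add: max_comp_list_def seq_list_eq list_all2_conv_all_nth)
next
  case (depth_par Us ds)
  then show thesis
    using that(3)[of False Us ds] by (simp add: max_comp_list_def par_list_eq list_all2_conv_all_nth)
qed (use that in auto)

lemma comp_partition_factors_ne_one:
  assumes "lpo_wf P" "comp_partition b P Bs"
  shows "(\<forall>U\<in>set (map (\<lambda>B. pom_of (restr P B)) Bs). U \<noteq> pom_one) \<longleftrightarrow> {} \<notin> set Bs"
proof -
  have "B \<subseteq> car P" if "B \<in> set Bs" for B
    using assms(2) that unfolding comp_partition_def by blast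
  then show ?thesis
    using pom_of_restr_eq_pom_one_iff[OF assms(1)] by auto
qed

lemma max_comp_list_partition:
  assumes wf: "lpo_wf P" and max: "max_comp_list b (pom_of P) Us"
  obtains Bs where "Us = map (\<lambda>B. pom_of (restr P B)) Bs" "max_comp_partition b P Bs"
proof -
  have "pom_of P = comp_list b Us"
    using max unfolding max_comp_list_def by blast
  then obtain Bs where Bs: "Us = map (\<lambda>B. pom_of (restr P B)) Bs" "comp_partition b P Bs"
    unfolding pom_of_eq_comp_list_iff[OF wf] by blast
  have "length Bs' \<le> length Bs" if "comp_partition b P Bs'" "{} \<notin> set Bs'" for Bs'
  proof -
    let ?Vs = "map (\<lambda>B. pom_of (restr P B)) Bs'"
    have "pom_of P = comp_list b ?Vs"
      unfolding pom_of_eq_comp_list_iff[OF wf] using that(1) by blast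
    moreover have "\<forall>V\<in>set ?Vs. V \<noteq> pom_one"
      unfolding comp_partition_factors_ne_one[OF wf that(1)] by (rule that(2))
    ultimately have "\<not> length ?Vs > length Us"
      using max unfolding max_comp_list_def by blast
    then show ?thesis
      using Bs(1) by simp
  qed
  moreover have "{} \<notin> set Bs"
    using max Bs comp_partition_factors_ne_one[OF wf Bs(2)] unfolding max_comp_list_def by simp
  ultimately show thesis
    using that Bs unfolding max_comp_partition_def by blast
qed

lemma max_comp_partition_list:
  assumes wf: "lpo_wf P" and max: "max_comp_partition b P Bs" and len: "length Bs > 1"
  shows "max_comp_list b (pom_of P) (map (\<lambda>B. pom_of (restr P B)) Bs)"
proof -
  let ?Us = "map (\<lambda>B. pom_of (restr P B)) Bs"
  have part: "comp_partition b P Bs" "{} \<notin> set Bs"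
    using max unfolding max_comp_partition_def by blast+
  have "length Vs \<le> length Bs"
    if ne: "\<forall>V\<in>set Vs. V \<noteq> pom_one" and eq: "pom_of P = comp_list b Vs" for Vs
  proof -
    obtain Bs' where Bs': "Vs = map (\<lambda>B. pom_of (restr P B)) Bs'" "comp_partition b P Bs'"
      using eq unfolding pom_of_eq_comp_list_iff[OF wf] by blast
    then have "{} \<notin> set Bs'"
      using ne comp_partition_factors_ne_one[OF wf Bs'(2)] by simp
    then show ?thesis
      using max Bs' unfolding max_comp_partition_def by simp
  qed
  moreover have "pom_of P = comp_list b ?Us"
    unfolding pom_of_eq_comp_list_iff[OF wf] using part(1) by blast
  moreover have "\<forall>U\<in>set ?Us. U \<noteq> pom_one"
    unfolding comp_partition_factors_ne_one[OF wf part(1)] by (rule part(2))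
  ultimately show ?thesis
    using len unfolding max_comp_list_def by fastforce
qed

lemma max_comp_list_factors:
  assumes "lpo_wf P" "max_comp_list b (pom_of P) Us"
  shows "set Us = (\<lambda>C. pom_of (restr P C)) ` link_comps b P"
  using max_comp_list_partition[OF assms] max_comp_partition_blocks[OF assms(1)] by (metis set_map)

lemma pom_comp_link_connected:
  assumes wf: "lpo_wf P" and eq: "pom_of P = pom_comp b A B" and "A \<noteq> pom_one" "B \<noteq> pom_one"
  shows "link_connected (\<not> b) P (car P)" "\<not> link_connected b P (car P)"
proof -
  obtain S T where ST: "S \<union> T = car P" "S \<inter> T = {}" "comp_related b P S T"
    "pom_of (restr P S) = A" "pom_of (restr P T) = B"
    using pom_comp_split[OF wf eq] by blast
  have "A = pom_one \<longleftrightarrow> S = {}" "B = pom_one \<longleftrightarrow> T = {}"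
    using pom_of_restr_eq_pom_one_iff[OF wf, of S] pom_of_restr_eq_pom_one_iff[OF wf, of T] ST(1,4,5)
    by auto
  then have ne: "S \<noteq> {}" "T \<noteq> {}"
    using assms(3,4) by blast+
  show "link_connected (\<not> b) P (car P)"
    using ne by (rule comp_split_link_connected[OF ST(1,2) _ _ ST(3)])
  show "\<not> link_connected b P (car P)"
    using ne by (rule comp_split_not_link_connected[OF ST(1,2) _ _ ST(3)])
qed

lemma max_comp_list_link_connected:
  assumes "lpo_wf P" "max_comp_list b (pom_of P) Us"
  shows "link_connected (\<not> b) P (car P)" "\<not> link_connected b P (car P)"
proof -
  obtain U V Us' where "Us = U # V # Us'"
    using assms(2) unfolding max_comp_list_def by (cases Us rule: remdups_adj.cases) auto
  moreover have "pom_of P = comp_list b Us" "\<forall>U\<in>set Us. U \<noteq> pom_one"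
    using assms(2) unfolding max_comp_list_def by blast+
  ultimately have "pom_of P = pom_comp b U (comp_list b (V # Us'))" "U \<noteq> pom_one"
    "comp_list b (V # Us') \<noteq> pom_one"
    unfolding comp_list_eq_pom_one_iff by auto
  then show "link_connected (\<not> b) P (car P)" "\<not> link_connected b P (car P)"
    using pom_comp_link_connected[OF assms(1)] by blast+
qed

lemma max_comp_list_kind_unique:
  assumes "max_comp_list b U Us" "max_comp_list b' U Vs"
  shows "b' = b"
  using max_comp_list_link_connected[OF rep_wf, of b U Us] max_comp_list_link_connected[OF rep_wf, of b' U Vs]
    assms by (cases b; cases b') auto

lemma max_comp_list_card:
  assumes "max_comp_list b U Us"
  shows "card (car (rep U)) \<ge> 2"
  using max_comp_list_link_connected(2)[OF rep_wf, of b U Us] assms link_connected_card_le_1[of "car (rep U)"]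
    rep_wf[of U] unfolding lpo_wf_def by fastforce

lemma pom_prim_ne_pom_one: "pom_prim a \<noteq> pom_one"
  using card_car_rep_pom_prim[of a] car_rep_eq_empty_iff[of "pom_prim a"] by auto

lemma has_depth_pom_one: "has_depth pom_one d \<Longrightarrow> d = 0"
  by (cases rule: has_depth_cases)
    (auto dest: max_comp_list_card
      simp: pom_prim_ne_pom_one pom_prim_ne_pom_one[symmetric] car_rep_eq_empty_iff[THEN iffD2])

lemma has_depth_pom_prim: "has_depth (pom_prim a) d \<Longrightarrow> d = 1"
  by (cases rule: has_depth_cases)
    (auto dest: max_comp_list_card simp: pom_prim_ne_pom_one card_car_rep_pom_prim)

lemma has_depth_unique: "has_depth U d \<Longrightarrow> has_depth U d' \<Longrightarrow> d' = d"
proof (induction arbitrary: d' rule: has_depth_induct)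
  case one
  then show ?case
    by (rule has_depth_pom_one)
next
  case (prim a)
  then show ?case
    by (rule has_depth_pom_prim)
next
  case (comp b U Us ds)
  from comp.prems show ?case
  proof (cases rule: has_depth_cases)
    case one
    then show ?thesis
      using max_comp_list_card[OF comp.hyps] by (simp add: car_rep_eq_empty_iff[THEN iffD2])
  next
    case (prim a)
    then show ?thesis
      using max_comp_list_card[OF comp.hyps] by (simp add: card_car_rep_pom_prim)
  next
    case (comp b' Vs ds')
    then have "b' = b"
      using max_comp_list_kind_unique comp.hyps by blast
    have "set Us = (\<lambda>C. pom_of (restr (rep U) C)) ` link_comps b (rep U)"
      using max_comp_list_factors[OF rep_wf, of b U Us] comp.hyps by simp
    moreover have "set Vs = (\<lambda>C. pom_of (restr (rep U) C)) ` link_comps b (rep U)"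
      using max_comp_list_factors[OF rep_wf, of b U Vs] \<open>max_comp_list b' U Vs\<close> \<open>b' = b\<close> by simp
    ultimately have "set ds = set ds'"
      using list_all2_functional_set_eq[OF comp.IH \<open>list_all2 has_depth Vs ds'\<close>] by auto
    then show ?thesis
      using \<open>d' = Max (set ds') + 1\<close> by simp
  qed
qed

lemma depth_eqI: "has_depth U d \<Longrightarrow> depth U = d"
  unfolding depth_def using has_depth_unique by blast

text \<open>Separability is what series-parallel pomsets contribute to the existence of the depth:
  a subset that is disconnected in one of the two graphs splits as a sequential or parallel
  composition.\<close>

definition separable :: "'a lpo \<Rightarrow> bool" where
  "separable P \<longleftrightarrow> (\<forall>S\<subseteq>car P. 2 \<le> card S \<longrightarrow> (\<exists>b. \<not> link_connected b P S))"

lemma separable_restr: "separable P \<Longrightarrow> S \<subseteq> car P \<Longrightarrow> separable (restr P S)"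
  unfolding separable_def by (auto simp: link_connected_restr)

lemma separable_comp:
  assumes ST: "S \<union> T = car P" "S \<inter> T = {}" "comp_related b P S T"
    and sep: "separable (restr P S)" "separable (restr P T)"
  shows "separable P"
  unfolding separable_def
proof (intro allI impI)
  fix X assume X: "X \<subseteq> car P" "2 \<le> card X"
  consider "X \<subseteq> S" | "X \<subseteq> T" | x y where "x \<in> X \<inter> S" "y \<in> X \<inter> T"
    using X(1) ST(1) by blast
  then show "\<exists>b. \<not> link_connected b P X"
  proof cases
    case 1
    then show ?thesis
      using sep(1) X(2) unfolding separable_def by (auto simp: link_connected_restr)
  next
    case 2
    then show ?thesis
      using sep(2) X(2) unfolding separable_def by (auto simp: link_connected_restr)
  next
    case 3
    have "\<not> link_connected b P X"
      by (rule comp_split_not_link_connected[of "X \<inter> S" "X \<inter> T"])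
        (use 3 X(1) ST in \<open>auto intro: comp_related_mono\<close>)
    then show ?thesis ..
  qed
qed

lemma separable_pom_comp:
  assumes wf: "lpo_wf P" and eq: "pom_of P = pom_comp b U V"
    and "\<And>Q. lpo_wf Q \<Longrightarrow> pom_of Q = U \<Longrightarrow> separable Q"
    and "\<And>Q. lpo_wf Q \<Longrightarrow> pom_of Q = V \<Longrightarrow> separable Q"
  shows "separable P"
proof -
  obtain S T where "S \<union> T = car P" "S \<inter> T = {}" "comp_related b P S T"
    "pom_of (restr P S) = U" "pom_of (restr P T) = V"
    by (rule pom_comp_split[OF wf eq])
  then show ?thesis
    using assms(3,4) restr_wf[OF wf] separable_comp by (metis Un_upper1 Un_upper2)
qed

lemma sp_pomset_separable:
  "U \<in> sp_pomsets \<Longrightarrow> lpo_wf P \<Longrightarrow> pom_of P = U \<Longrightarrow> separable P"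
proof (induction arbitrary: P rule: sp_pomsets.induct)
  case sp_one
  then show ?case
    unfolding separable_def by (simp add: pom_of_eq_pom_one_iff)
next
  case (sp_prim a)
  then have "card (car P) = 1"
    using pom_of_eq_pom_prim_iff by blast
  then have "card S \<le> 1" if "S \<subseteq> car P" for S
    using card_mono[OF _ that] sp_prim.prems(1) unfolding lpo_wf_def by simp
  then show ?case
    unfolding separable_def by (meson numeral_le_one_iff order_trans semiring_norm(69))
next
  case (sp_seq U V)
  then show ?case
    using separable_pom_comp[of P True U V] by (simp add: pom_seq_eq_pom_comp)
next
  case (sp_par U V)
  then show ?case
    using separable_pom_comp[of P False U V] by (simp add: pom_par_eq_pom_comp)
qed

lemma has_depth_exists:
  assumes "lpo_wf P" "separable P"
  shows "\<exists>d. has_depth (pom_of P) d"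
  using assms
proof (induction "card (car P)" arbitrary: P rule: less_induct)
  case less
  note wf = less.prems(1)
  have fin: "finite (car P)"
    using wf unfolding lpo_wf_def by blast
  consider "car P = {}" | "card (car P) = 1" | "2 \<le> card (car P)"
    using fin by (metis One_nat_def card_0_eq less_2_cases not_le)
  then show ?case
  proof cases
    case 1
    then show ?thesis
      using depth_one pom_of_eq_pom_one_iff[OF wf] by metis
  next
    case 2
    then show ?thesis
      using depth_prim pom_of_eq_pom_prim_iff[OF wf] by metis
  next
    case 3
    then obtain b where disconnected: "\<not> link_connected b P (car P)"
      using less.prems(2) unfolding separable_def by blast
    obtain Bs where max: "max_comp_partition b P Bs"
      using max_comp_partition_exists[OF wf] by blast
    have "\<exists>d. has_depth (pom_of (restr P B)) d" if "B \<in> set Bs" for B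
      using less.hyps[of "restr P B"] psubset_card_mono[OF fin] restr_wf[OF wf]
        separable_restr[OF less.prems(2)] max_comp_partition_psubset[OF wf max disconnected that]
      by auto
    then have "list_all2 has_depth (map (\<lambda>B. pom_of (restr P B)) Bs)
        (map (\<lambda>B. SOME d. has_depth (pom_of (restr P B)) d) Bs)"
      by (auto simp: list_all2_conv_all_nth intro: someI_ex)
    moreover have "max_comp_list b (pom_of P) (map (\<lambda>B. pom_of (restr P B)) Bs)"
      using max_comp_partition_list[OF wf max max_comp_partition_length_gt_1[OF wf max disconnected]] .
    ultimately show ?thesis
      using has_depth_compI by blast
  qed
qed

lemma has_depth_depth: "U \<in> sp_pomsets \<Longrightarrow> has_depth U (depth U)"
  using has_depth_exists[OF rep_wf sp_pomset_separable[OF _ rep_wf]] depth_eqI by fastforce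

lemma has_depth_link_comp_less:
  assumes wf: "lpo_wf P" and hP: "has_depth (pom_of P) d"
    and C: "C \<in> link_comps b P" "C \<noteq> car P" and hC: "has_depth (pom_of (restr P C)) d'"
  shows "d' < d"
proof -
  have disconnected: "\<not> link_connected b P (car P)"
    using C link_connected_link_comps by blast
  have fin: "finite (car P)"
    using wf unfolding lpo_wf_def by blast
  from hP show ?thesis
  proof (cases rule: has_depth_cases)
    case one
    then show ?thesis
      using disconnected link_connected_card_le_1[OF fin] pom_of_eq_pom_one_iff[OF wf] by auto
  next
    case (prim a)
    then show ?thesis
      using disconnected link_connected_card_le_1[OF fin] pom_of_eq_pom_prim_iff[OF wf] by auto
  next
    case (comp b' Us ds)
    have "b' = b"
      using disconnected max_comp_list_link_connected(1)[OF wf comp(1)] by (cases b; cases b') auto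
    then have "pom_of (restr P C) \<in> set Us"
      using max_comp_list_factors[OF wf] comp(1) C(1) by blast
    then obtain e where "e \<in> set ds" "has_depth (pom_of (restr P C)) e"
      using list_all2_in_set1[OF comp(2)] by blast
    then have "d' \<le> Max (set ds)"
      using has_depth_unique[OF _ hC] by simp
    then show ?thesis
      using comp(3) by simp
  qed
qed

text \<open>Quantifying over all representatives spares us the isomorphism invariance of
  connectivity.\<close>

definition pom_link_connected :: "bool \<Rightarrow> 'a pomset \<Rightarrow> bool" where
  "pom_link_connected b U \<longleftrightarrow> (\<forall>P. lpo_wf P \<and> pom_of P = U \<longrightarrow> link_connected b P (car P))"

lemma pom_link_connected_pom_comp:
  "A \<noteq> pom_one \<Longrightarrow> B \<noteq> pom_one \<Longrightarrow> pom_link_connected (\<not> b) (pom_comp b A B)"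
  unfolding pom_link_connected_def using pom_comp_link_connected(1) by blast

lemma pom_link_connected_pom_comp_pom_comp:
  assumes "Z \<noteq> pom_one" "V \<noteq> pom_one \<or> W \<noteq> pom_one"
  shows "pom_link_connected (\<not> b) (pom_comp b V (pom_comp b Z W))"
proof (cases "V = pom_one")
  case True
  then show ?thesis
    using assms by (simp add: pom_link_connected_pom_comp)
next
  case False
  then show ?thesis
    using assms by (simp add: pom_link_connected_pom_comp pom_comp_eq_pom_one_iff)
qed

lemma has_depth_factor_less:
  assumes hU: "has_depth (comp_list b Us) d" and ij: "i < length Us" "j < length Us" "i \<noteq> j"
    and ne: "Us ! i \<noteq> pom_one" "Us ! j \<noteq> pom_one" and conn: "pom_link_connected b (Us ! i)"
    and hi: "has_depth (Us ! i) d'"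
  shows "d' < d"
proof -
  define P where "P = rep (comp_list b Us)"
  have wf: "lpo_wf P"
    unfolding P_def by simp
  obtain Bs where Bs: "Us = map (\<lambda>B. pom_of (restr P B)) Bs" "comp_partition b P Bs"
    using pom_of_eq_comp_list_iff[OF wf, of b Us] unfolding P_def by auto
  define B where "B = Bs ! i"
  have lens: "i < length Bs" "j < length Bs"
    using Bs(1) ij by simp_all
  have sub: "B \<subseteq> car P" "Bs ! j \<subseteq> car P"
    using Bs(2) lens nth_mem unfolding comp_partition_def B_def by blast+
  have factor: "pom_of (restr P B) = Us ! i" "pom_of (restr P (Bs ! j)) = Us ! j"
    using Bs(1) lens unfolding B_def by simp_all
  then have "B \<noteq> {}" "Bs ! j \<noteq> {}"
    using ne sub pom_of_restr_eq_pom_one_iff[OF wf] by metis+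
  moreover have "B \<inter> Bs ! j = {}"
    unfolding B_def by (rule comp_partition_nth_disjoint[OF Bs(2) lens ij(3)])
  ultimately have "B \<noteq> car P"
    using sub(2) by blast
  obtain x where x: "x \<in> B"
    using \<open>B \<noteq> {}\<close> by blast
  have "link_connected b (restr P B) B"
    using conn factor(1) restr_wf[OF wf sub(1)] unfolding pom_link_connected_def by auto
  then have "link_connected b P B"
    using link_connected_restr[of B B b P] by simp
  moreover have "B \<in> set Bs"
    unfolding B_def using lens(1) by simp
  ultimately have "B = link_comp b P x"
    using link_connected_block_eq_link_comp[OF Bs(2) _ x] by blast
  then have "B \<in> link_comps b P"
    unfolding link_comps_def using x sub(1) by blast
  moreover have "has_depth (pom_of P) d"
    using hU unfolding P_def by simp
  ultimately show ?thesis
    using has_depth_link_comp_less[OF wf _ _ \<open>B \<noteq> car P\<close>] hi factor(1) by simp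
qed

section \<open>Pumping\<close>

definition pump :: "'a pomset \<Rightarrow> 'a pomset \<Rightarrow> 'a pomset \<Rightarrow> 'a pomset \<Rightarrow> 'a pomset" where
  "pump V X W Y = pom_seq V (pom_seq (pom_par X Y) W)"

lemma pump_in_lang:
  assumes "Y \<in> lang delta gamma F q0" "trace delta gamma F q0 V q0"
    "trace delta gamma F q2 X q3" "q3 \<in> F" "trace delta gamma F q4 W q5" "q5 \<in> F"
    "gamma q0 q2 q0 = q4"
  shows "pump V X W Y \<in> lang delta gamma F q0"
proof -
  obtain q where "q \<in> F" "trace delta gamma F q0 Y q"
    using assms(1) unfolding lang_def by blast
  then have "trace delta gamma F q0 (pom_par X Y) q4"
    using tr_par[OF assms(3,4)] assms(7) by metis
  then have "trace delta gamma F q0 (pump V X W Y) q5"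
    unfolding pump_def using assms(2,5) by (blast intro: tr_seq)
  then show ?thesis
    using assms(6) unfolding lang_def by blast
qed

lemma pump_sp: "V \<in> sp_pomsets \<Longrightarrow> X \<in> sp_pomsets \<Longrightarrow> W \<in> sp_pomsets \<Longrightarrow> Y \<in> sp_pomsets \<Longrightarrow>
    pump V X W Y \<in> sp_pomsets"
  unfolding pump_def by (intro sp_seq sp_par)

lemma funpow_pump_sp:
  "V \<in> sp_pomsets \<Longrightarrow> X \<in> sp_pomsets \<Longrightarrow> W \<in> sp_pomsets \<Longrightarrow> Y \<in> sp_pomsets \<Longrightarrow>
    (pump V X W ^^ k) Y \<in> sp_pomsets"
  by (induction k) (simp_all add: pump_sp)

lemma funpow_pump_in_lang:
  assumes "Y \<in> lang delta gamma F q0" "trace delta gamma F q0 V q0"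
    "trace delta gamma F q2 X q3" "q3 \<in> F" "trace delta gamma F q4 W q5" "q5 \<in> F"
    "gamma q0 q2 q0 = q4"
  shows "(pump V X W ^^ k) Y \<in> lang delta gamma F q0"
  by (induction k) (simp_all add: assms(1) pump_in_lang[OF _ assms(2-7)])

lemma depth_pump_less:
  assumes sp: "V \<in> sp_pomsets" "X \<in> sp_pomsets" "W \<in> sp_pomsets" "Y \<in> sp_pomsets"
    and X: "X \<noteq> pom_one" and VW: "V \<noteq> pom_one \<or> W \<noteq> pom_one"
  shows "depth (pump V X W Y) < depth (pump V X W (pump V X W Y))"
proof -
  let ?Y = "pump V X W Y" and ?Z = "pom_par X (pump V X W Y)"
  have pump_eq: "pump V X W Z = pom_comp True V (pom_comp True (pom_comp False X Z) W)" for Z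
    unfolding pump_def pom_seq_eq_pom_comp pom_par_eq_pom_comp ..
  have Y: "?Y \<noteq> pom_one"
    using X by (simp add: pump_eq pom_comp_eq_pom_one_iff)
  have sp_Z: "?Z \<in> sp_pomsets"
    using sp_par[OF sp(2) pump_sp[OF sp]] .
  have "depth ?Y < depth ?Z"
  proof (rule has_depth_factor_less[of False "[X, ?Y]" _ 1 0])
    show "has_depth (comp_list False [X, ?Y]) (depth ?Z)"
      using has_depth_depth[OF sp_Z] by (simp add: pom_par_eq_pom_comp)
    show "pom_link_connected False ([X, ?Y] ! 1)"
      using pom_link_connected_pom_comp_pom_comp[of "pom_comp False X Y" V W True] X VW
      by (simp add: pump_eq pom_comp_eq_pom_one_iff)
  qed (use X Y has_depth_depth[OF pump_sp[OF sp]] in auto)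
  also have "depth ?Z < depth (pump V X W ?Y)"
  proof (rule has_depth_factor_less[of True "[V, ?Z, W]" _ 1 "if V = pom_one then 2 else 0"])
    show "has_depth (comp_list True [V, ?Z, W]) (depth (pump V X W ?Y))"
      using has_depth_depth[OF pump_sp[OF sp(1-3) pump_sp[OF sp]]]
      by (simp add: pump_eq pom_par_eq_pom_comp)
    show "pom_link_connected True ([V, ?Z, W] ! 1)"
      using pom_link_connected_pom_comp[OF X Y, of False] by (simp add: pom_par_eq_pom_comp)
  qed (use VW X has_depth_depth[OF sp_Z] in \<open>auto simp: pom_comp_eq_pom_one_iff pom_par_eq_pom_comp\<close>)
  finally show ?thesis .
qed

theorem mainTheorem9:
  fixes delta :: "'q \<Rightarrow> 'a::finite \<Rightarrow> 'q" and gamma :: "'q \<Rightarrow> 'q \<Rightarrow> 'q \<Rightarrow> 'q"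
    and F :: "'q set" and qbot qtop :: 'q
    and q0 q1 q2 q3 q4 q5 :: 'q and U V W X :: "'a pomset"
  assumes PA: "is_PA delta gamma F qbot qtop"
    and fs: "finitely_supported delta gamma qbot"
    and F_states: "q1 \<in> F" "q3 \<in> F" "q5 \<in> F"
    and sp: "U \<in> sp_pomsets" "V \<in> sp_pomsets" "W \<in> sp_pomsets" "X \<in> sp_pomsets"
    and tU: "trace delta gamma F q0 U q1"
    and tV: "trace delta gamma F q0 V q0"
    and tX: "trace delta gamma F q2 X q3"
    and tW: "trace delta gamma F q4 W q5"
    and fork: "gamma q0 q2 q0 = q4"
    and X1: "X \<noteq> pom_one"
    and WV: "W \<noteq> pom_one \<or> V \<noteq> pom_one"
  shows "\<forall>n::nat. \<exists>Y \<in> lang delta gamma F q0. depth Y > n"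
proof -
  define Y where "Y k = (pump V X W ^^ k) U" for k
  have "U \<in> lang delta gamma F q0"
    using tU F_states(1) unfolding lang_def by blast
  then have lang_Y: "Y k \<in> lang delta gamma F q0" for k
    unfolding Y_def by (rule funpow_pump_in_lang[OF _ tV tX F_states(2) tW F_states(3) fork])
  have depth_Suc: "depth (Y (Suc k)) < depth (Y (Suc (Suc k)))" for k
    unfolding Y_def funpow.simps comp_def
    using depth_pump_less[OF sp(2,4,3) funpow_pump_sp[OF sp(2,4,3,1)] X1] WV by blast
  then have "strict_mono (\<lambda>k. depth (Y (Suc k)))"
    unfolding strict_mono_Suc_iff by blast
  then have "n < depth (Y (Suc (Suc n)))" for n
    using strict_mono_imp_increasing depth_Suc le_less_trans by blast
  then show ?thesis
    using lang_Y by blast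
qed

end
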